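(* Let $E$ be a separable Banach sequence lattice containing all unit vectors $e_k$, on which the shifts $\tau_n$, $n\in\mathbb Z$, are bounded, and assume that with $s_k:=\|e_k\|_E$, $$k_+(E)=\lim_{n\to\infty}\Big(\sup_{k>n}\frac{s_k}{s_{k-n}}\Big)^{1/n},\qquad k_-(E)=\lim_{n\to\infty}\Big(\sup_{k\in\mathbb N}\frac{s_k}{s_{n+k}}\Big)^{1/n}.$$ For $\lambda>0$ let $T_\lambda=\tau_1-\lambda I$ on $E$. Then the following are equivalent: (i) $T_\lambda$ is an isomorphic embedding of $E$ into itself (there is $c>0$ with $\|T_\lambda x\|_E\ge c\|x\|_E$ for all $x$); (ii) $T_\lambda$ has closed range; (iii) $\lambda\in(0,1/k_-(E))\cup(k_+(E),\infty)$. Moreover, if $\lambda>k_+(E)$ then $T_\lambda(E)=E$, and if $0<\lambda<1/k_-(E)$ then $T_\lambda(E)$ is the closed subspace of codimension $1$ in $E$ consisting of all $(a_k)\in E$ with $\sum_{k=1}^\infty\lambda^ka_k=0$ (this series converging for every $(a_k)\in E$).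
   Context: A Banach sequence lattice is a Banach space $E$ of real sequences such that $x\in E$, $|y_k|\le|x_k|$ imply $y\in E$, $\|y\|_E\le\|x\|_E$. For $n\in\mathbb Z$, $\tau_nx=(x_{k-n})_{k\ge1}$ with $x_j:=0$ for $j\notin\mathbb N$. For a Banach sequence lattice on which all $\tau_n$ are bounded, $k_+(E)=\lim_{n\to\infty}\|\tau_n\|_E^{1/n}$ and $k_-(E)=\lim_{n\to\infty}\|\tau_{-n}\|_E^{1/n}$; the hypothesis says these exponents are computed by the displayed formulas involving only the norms of unit vectors. *)

theory Defs
  imports "HOL-Analysis.Analysis" "HOL-Library.Function_Algebras"
begin

text \<open>Sequences are functions nat => real; the paper's index k (k >= 1) corresponds
  to our index k - 1 (we index from 0).  A Banach sequence lattice is given by a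
  carrier set E and a norm function N (only meaningful on E).\<close>

type_synonym seq = "nat \<Rightarrow> real"

definition banach_seq_lattice :: "seq set \<Rightarrow> (seq \<Rightarrow> real) \<Rightarrow> bool" where
  "banach_seq_lattice E N \<longleftrightarrow>
     (0::seq) \<in> E \<and>
     (\<forall>x\<in>E. \<forall>y\<in>E. x + y \<in> E) \<and>
     (\<forall>x\<in>E. \<forall>c::real. (\<lambda>k. c * x k) \<in> E) \<and>
     (\<forall>x\<in>E. N x \<ge> 0) \<and>
     (\<forall>x\<in>E. N x = 0 \<longleftrightarrow> x = 0) \<and>
     (\<forall>x\<in>E. \<forall>c::real. N (\<lambda>k. c * x k) = \<bar>c\<bar> * N x) \<and>
     (\<forall>x\<in>E. \<forall>y\<in>E. N (x + y) \<le> N x + N y) \<and>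
     (\<forall>f::nat \<Rightarrow> seq. (\<forall>j. f j \<in> E) \<and>
         (\<forall>\<epsilon>>0. \<exists>M. \<forall>i\<ge>M. \<forall>j\<ge>M. N (f i - f j) < \<epsilon>)
         \<longrightarrow> (\<exists>z\<in>E. (\<lambda>j. N (f j - z)) \<longlonglongrightarrow> 0)) \<and>
     (\<forall>x\<in>E. \<forall>y::seq. (\<forall>k. \<bar>y k\<bar> \<le> \<bar>x k\<bar>) \<longrightarrow> y \<in> E \<and> N y \<le> N x)"

definition norm_separable :: "seq set \<Rightarrow> (seq \<Rightarrow> real) \<Rightarrow> bool" where
  "norm_separable E N \<longleftrightarrow>
     (\<exists>D. countable D \<and> D \<subseteq> E \<and> (\<forall>x\<in>E. \<forall>\<epsilon>>0. \<exists>d\<in>D. N (x - d) < \<epsilon>))"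

text \<open>Unit vector (paper's e_{k+1}).\<close>
definition unitv :: "nat \<Rightarrow> seq" where
  "unitv k = (\<lambda>j. if j = k then 1 else 0)"

definition tau :: "int \<Rightarrow> seq \<Rightarrow> seq" where
  "tau n x = (\<lambda>k. if int k - n \<ge> 0 then x (nat (int k - n)) else 0)"

definition bounded_on :: "seq set \<Rightarrow> (seq \<Rightarrow> real) \<Rightarrow> (seq \<Rightarrow> seq) \<Rightarrow> bool" where
  "bounded_on E N T \<longleftrightarrow> (\<forall>x\<in>E. T x \<in> E) \<and> (\<exists>C. \<forall>x\<in>E. N (T x) \<le> C * N x)"

definition opnorm :: "seq set \<Rightarrow> (seq \<Rightarrow> real) \<Rightarrow> (seq \<Rightarrow> seq) \<Rightarrow> real" where
  "opnorm E N T = Sup {N (T x) | x. x \<in> E \<and> N x \<le> 1}"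

definition k_plus :: "seq set \<Rightarrow> (seq \<Rightarrow> real) \<Rightarrow> real" where
  "k_plus E N = lim (\<lambda>n. opnorm E N (tau (int n)) powr (1 / real n))"

definition k_minus :: "seq set \<Rightarrow> (seq \<Rightarrow> real) \<Rightarrow> real" where
  "k_minus E N = lim (\<lambda>n. opnorm E N (tau (- int n)) powr (1 / real n))"

definition Tlam :: "real \<Rightarrow> seq \<Rightarrow> seq" where
  "Tlam l x = (\<lambda>k. tau 1 x k - l * x k)"

definition N_closed :: "seq set \<Rightarrow> (seq \<Rightarrow> real) \<Rightarrow> seq set \<Rightarrow> bool" where
  "N_closed E N S \<longleftrightarrow> (\<forall>f z. (\<forall>j. f j \<in> S) \<and> z \<in> E \<and> (\<lambda>j. N (f j - z)) \<longlonglongrightarrow> 0 \<longrightarrow> z \<in> S)"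

end

theory Submission
  imports Defs
begin

text \<open>For \<open>\<lambda> > k\<^sub>+\<close> the Neumann series \<open>-\<Sum> \<lambda>\<^sup>-\<^sup>n\<^sup>-\<^sup>1 \<tau>\<^sub>n\<close> inverts \<open>T\<^sub>\<lambda>\<close>. For \<open>\<lambda> < 1/k\<^sub>-\<close> the
  series \<open>\<Sum> \<lambda>\<^sup>n \<tau>\<^sub>-\<^sub>n\<^sub>-\<^sub>1\<close> converges and inverts \<open>T\<^sub>\<lambda>\<close> on the hyperplane
  \<open>\<Sum> \<lambda>\<^sup>k\<^sup>+\<^sup>1 a\<^sub>k = 0\<close>, which is exactly the range. In both cases \<open>T\<^sub>\<lambda>\<close> is bounded below,
  so its range is closed.

  For \<open>1/k\<^sub>- \<le> \<lambda> \<le> k\<^sub>+\<close> the hypothesis that \<open>k\<^sub>\<plusminus>\<close> are computed from \<open>s\<^sub>k = \<parallel>e\<^sub>k\<parallel>\<close>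
  implies that at every lag \<open>m\<close> the sequence \<open>s\<^sub>j / \<lambda>\<^sup>j\<close> neither doubles for all \<open>j\<close> nor halves
  for all \<open>j\<close>. Hence it has arbitrarily wide humps, and smoothed geometric blocks \<open>\<lambda>\<^sup>-\<^sup>j\<close>
  over these humps are nonnegative approximate eigenvectors of \<open>T\<^sub>\<lambda>\<close>. If the range were
  closed, a series of such vectors would produce an element of \<open>E\<close> dominating vectors of
  arbitrarily large norm.\<close>

lemma sum_apply: "(\<Sum>i\<in>I. f i) k = (\<Sum>i\<in>I. f i k)"
  by (induction I rule: infinite_finite_induct) auto

lemma tau_nat_apply: "tau (int n) x k = (if n \<le> k then x (k - n) else 0)"
  by (auto simp: tau_def nat_diff_distrib)

lemma tau_neg_apply: "tau (- int n) x k = x (k + n)"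
  by (auto simp: tau_def nat_add_distrib)

lemma tau_zero: "tau n 0 = 0"
  by (auto simp: tau_def)

lemma tau_scale: "tau n (\<lambda>k. c * x k) = (\<lambda>k. c * tau n x k)"
  by (auto simp: tau_def)

lemma tau_tau:
  assumes "0 \<le> n \<and> 0 \<le> m \<or> n \<le> 0 \<and> m \<le> 0"
  shows "tau n (tau m x) = tau (n + m) x"
  using assms by (auto simp: tau_def fun_eq_iff algebra_simps nat_diff_distrib)

lemma tau_unitv: "0 \<le> int k + n \<Longrightarrow> tau n (unitv k) = unitv (nat (int k + n))"
  by (auto simp: tau_def unitv_def fun_eq_iff)

lemma unitv_nonzero: "unitv k \<noteq> 0"
  by (auto simp: unitv_def fun_eq_iff)

lemma Tlam_eq: "Tlam l x = tau 1 x + (\<lambda>k. (- l) * x k)"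
  by (auto simp: Tlam_def)

lemma Tlam_0 [simp]: "Tlam l x 0 = - l * x 0"
  by (simp add: Tlam_def tau_def)

lemma Tlam_Suc [simp]: "Tlam l x (Suc k) = x k - l * x (Suc k)"
  by (simp add: Tlam_def tau_def)

lemma Tlam_add: "Tlam l (x + y) = Tlam l x + Tlam l y"
  by (auto simp: Tlam_def tau_def fun_eq_iff algebra_simps)

lemma Tlam_diff: "Tlam l (x - y) = Tlam l x - Tlam l y"
  by (auto simp: Tlam_def tau_def fun_eq_iff algebra_simps)

lemma Tlam_scale: "Tlam l (\<lambda>k. c * x k) = (\<lambda>k. c * Tlam l x k)"
  by (auto simp: Tlam_def tau_def fun_eq_iff algebra_simps)

lemma Tlam_sum: "Tlam l (\<Sum>i\<in>I. f i) = (\<Sum>i\<in>I. Tlam l (f i))"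
proof (induction I rule: infinite_finite_induct)
  case (insert i I)
  then show ?case
    by (simp only: sum.insert[OF insert.hyps] Tlam_add insert.IH)
qed (simp_all add: Tlam_def tau_def fun_eq_iff)

text \<open>On all real sequences \<open>T\<^sub>\<lambda>\<close> is a bijection (a lower triangular matrix with diagonal
  \<open>-\<lambda>\<close>); its inverse is computed by forward substitution.\<close>

primrec Tlam_inv :: "real \<Rightarrow> seq \<Rightarrow> seq" where
  "Tlam_inv l a 0 = - a 0 / l"
| "Tlam_inv l a (Suc k) = (Tlam_inv l a k - a (Suc k)) / l"

lemma Tlam_inv_Tlam:
  assumes "l \<noteq> 0"
  shows "Tlam_inv l (Tlam l x) = x"
proof
  show "Tlam_inv l (Tlam l x) k = x k" for k
    by (induction k) (use assms in \<open>auto simp: field_simps\<close>)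
qed

lemma Tlam_Tlam_inv:
  assumes "l \<noteq> 0"
  shows "Tlam l (Tlam_inv l a) = a"
proof
  show "Tlam l (Tlam_inv l a) k = a k" for k
    by (cases k) (use assms in \<open>auto simp: field_simps\<close>)
qed

lemma Tlam_inv_tendsto:
  assumes "\<And>k. (\<lambda>j. a j k) \<longlonglongrightarrow> b k"
  shows "(\<lambda>j. Tlam_inv l (a j) k) \<longlonglongrightarrow> Tlam_inv l b k"
  by (induction k) (auto simp: divide_inverse intro!: tendsto_intros assms)

lemma abs_Tlam_inv_le:
  "l > 0 \<Longrightarrow> \<bar>Tlam_inv l a k\<bar> \<le> (\<Sum>n\<le>k. \<bar>a (k - n)\<bar> / l ^ Suc n)"
proof (induction k)
  case 0
  then show ?case by (simp add: abs_divide)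
next
  case (Suc k)
  have "\<bar>Tlam_inv l a (Suc k)\<bar> \<le> (\<bar>Tlam_inv l a k\<bar> + \<bar>a (Suc k)\<bar>) / l"
    using Suc.prems by (simp add: abs_divide divide_right_mono)
  also have "\<dots> \<le> ((\<Sum>n\<le>k. \<bar>a (k - n)\<bar> / l ^ Suc n) + \<bar>a (Suc k)\<bar>) / l"
    using Suc by (intro divide_right_mono) auto
  also have "\<dots> = (\<Sum>n\<le>Suc k. \<bar>a (Suc k - n)\<bar> / l ^ Suc n)"
    by (subst sum.atMost_Suc_shift) (simp add: sum_divide_distrib add_divide_distrib algebra_simps)
  finally show ?case .
qed

text \<open>For \<open>\<lambda> < 1/k\<^sub>-\<close> the series \<open>\<Sum> \<lambda>\<^sup>n \<tau>\<^sub>-\<^sub>n\<^sub>-\<^sub>1\<close> is a right inverse of \<open>T\<^sub>\<lambda>\<close> on the kernel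
  of the functional \<open>a \<mapsto> \<Sum> \<lambda>\<^sup>k\<^sup>+\<^sup>1 a\<^sub>k\<close>, which vanishes on the range of \<open>T\<^sub>\<lambda>\<close>.\<close>

definition Tlam_rinv :: "real \<Rightarrow> seq \<Rightarrow> seq" where
  "Tlam_rinv l a m = (\<Sum>n. l ^ n * a (m + 1 + n))"

definition range_functional :: "real \<Rightarrow> seq \<Rightarrow> real" where
  "range_functional l a = (\<Sum>k. l ^ Suc k * a k)"

lemma summable_range_functional:
  fixes l :: real
  assumes l: "l > 0" and sa: "\<And>m. summable (\<lambda>n. \<bar>l ^ n * a (m + 1 + n)\<bar>)"
  shows "summable (\<lambda>k. l ^ Suc k * a k)"
proof -
  have "summable (\<lambda>n. l ^ 2 * \<bar>l ^ n * a (0 + 1 + n)\<bar>)"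
    using sa[of 0] by (rule summable_mult)
  then have "summable (\<lambda>n. \<bar>l ^ Suc (Suc n) * a (Suc n)\<bar>)"
    using l by (simp add: abs_mult power2_eq_square algebra_simps)
  then have "summable (\<lambda>k. \<bar>l ^ Suc k * a k\<bar>)"
    by (subst summable_Suc_iff[symmetric])
  then show ?thesis
    by (rule summable_rabs_cancel)
qed

lemma range_functional_Tlam:
  fixes l :: real
  assumes "summable (\<lambda>k. l ^ Suc k * x k)"
  shows "range_functional l (Tlam l x) = 0"
proof -
  have telescope: "(\<Sum>k<Suc K. l ^ Suc k * Tlam l x k) = - l * (l ^ Suc K * x K)" for K
    by (induction K) (simp_all add: algebra_simps power2_eq_square)
  have "(\<lambda>K. - l * (l ^ Suc K * x K)) \<longlonglongrightarrow> - l * 0"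
    using summable_LIMSEQ_zero[OF assms] by (intro tendsto_intros)
  then have "(\<lambda>K. \<Sum>k<Suc K. l ^ Suc k * Tlam l x k) \<longlonglongrightarrow> 0"
    unfolding telescope by simp
  then have "(\<lambda>k. l ^ Suc k * Tlam l x k) sums 0"
    unfolding sums_def by (rule LIMSEQ_imp_Suc)
  then show ?thesis
    unfolding range_functional_def by (rule sums_unique[symmetric])
qed

lemma Tlam_Tlam_rinv:
  fixes l :: real
  assumes l: "l > 0" and sa: "\<And>m. summable (\<lambda>n. \<bar>l ^ n * a (m + 1 + n)\<bar>)"
  shows "Tlam l (Tlam_rinv l a) = (\<lambda>k. a k - (if k = 0 then range_functional l a / l else 0))"
proof
  fix k
  have sa': "summable (\<lambda>n. l ^ n * a (m + 1 + n))" for m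
    using sa by (rule summable_rabs_cancel)
  have shift: "(\<Sum>n. l ^ Suc n * a (m + 1 + Suc n)) = l * Tlam_rinv l a (Suc m)" for m
    unfolding Tlam_rinv_def using suminf_mult[OF sa'[of "Suc m"], of l] by (simp add: algebra_simps)
  show "Tlam l (Tlam_rinv l a) k = a k - (if k = 0 then range_functional l a / l else 0)"
  proof (cases k)
    case 0
    have "range_functional l a - l * a 0 = (\<Sum>n. l ^ Suc (Suc n) * a (Suc n))"
      unfolding range_functional_def using suminf_split_head[OF summable_range_functional[OF l sa]] by simp
    also have "\<dots> = l ^ 2 * Tlam_rinv l a 0"
      unfolding Tlam_rinv_def using suminf_mult[OF sa'[of 0], of "l ^ 2"]
      by (simp add: power2_eq_square algebra_simps)
    finally show ?thesis
      using 0 l by (simp add: power2_eq_square field_simps)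
  next
    case (Suc m)
    have "Tlam_rinv l a m - a (Suc m) = l * Tlam_rinv l a (Suc m)"
      using suminf_split_head[OF sa'[of m]] shift[of m] unfolding Tlam_rinv_def by simp
    then show ?thesis
      using Suc by simp
  qed
qed

section \<open>Submultiplicative sequences\<close>

lemma power_le_1_plus_power:
  fixes x :: real
  assumes "x \<ge> 0" and "r \<le> p"
  shows "x ^ r \<le> 1 + x ^ p"
proof (cases "x \<le> 1")
  case True
  then have "x ^ r \<le> 1"
    using assms(1) by (intro power_le_one)
  moreover have "0 \<le> x ^ p"
    using assms(1) by simp
  ultimately show ?thesis
    by linarith
next
  case False
  then have "x ^ r \<le> x ^ p"
    using assms(2) by (intro power_increasing) auto
  then show ?thesis
    by simp
qed

lemma submultiplicative_iterate:
  fixes q :: "nat \<Rightarrow> real"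
  assumes pos: "\<And>n. q n > 0" and sub: "\<And>n m. q (n + m) \<le> q n * q m"
  shows "q (m * p + r) \<le> q p ^ m * q r"
proof (induction m)
  case (Suc m)
  have "q (Suc m * p + r) = q (p + (m * p + r))"
    by (simp add: algebra_simps)
  also have "\<dots> \<le> q p * q (m * p + r)"
    by (rule sub)
  also have "\<dots> \<le> q p * (q p ^ m * q r)"
    using Suc pos[of p] by (intro mult_left_mono) auto
  finally show ?case
    by (simp add: algebra_simps)
qed simp

lemma submultiplicative_geometric_bound:
  fixes q :: "nat \<Rightarrow> real"
  assumes pos: "\<And>n. q n > 0" and sub: "\<And>n m. q (n + m) \<le> q n * q m"
    and p: "p \<ge> 1" and \<beta>: "\<beta> > 0" and qp: "q p \<le> \<beta> ^ p"
  shows "\<exists>K>0. \<forall>n. q n \<le> K * \<beta> ^ n"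
proof -
  define M where "M = (\<Sum>r<p. q r)"
  have qM: "q r \<le> M" if "r < p" for r
    unfolding M_def using that pos by (intro member_le_sum) (auto intro: less_imp_le)
  have M0: "M > 0"
    using qM[of 0] pos[of 0] p by force
  define K where "K = M * (1 + (1 / \<beta>) ^ p)"
  have "q n \<le> K * \<beta> ^ n" for n
  proof -
    define m r where "m = n div p" and "r = n mod p"
    have n: "n = m * p + r" and rp: "r < p"
      unfolding m_def r_def using p by auto
    have "q n \<le> q p ^ m * q r"
      using submultiplicative_iterate[OF pos sub] n by simp
    also have "\<dots> \<le> (\<beta> ^ p) ^ m * M"
      using qp pos[of p] pos[of r] qM[OF rp] by (intro mult_mono power_mono) (auto simp: less_imp_le)
    also have "(\<beta> ^ p) ^ m = \<beta> ^ n * (1 / \<beta>) ^ r"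
      using \<beta> by (simp add: n power_add power_mult[symmetric] mult.commute power_one_over field_simps)
    also have "\<beta> ^ n * (1 / \<beta>) ^ r * M \<le> \<beta> ^ n * (1 + (1 / \<beta>) ^ p) * M"
      using power_le_1_plus_power[of "1 / \<beta>" r p] rp \<beta> M0
      by (intro mult_right_mono mult_left_mono) auto
    finally show ?thesis
      unfolding K_def by (simp add: algebra_simps)
  qed
  moreover have "K > 0"
    unfolding K_def using M0 \<beta> by (intro mult_pos_pos add_pos_nonneg) auto
  ultimately show ?thesis
    by blast
qed

lemma le_power_if_root_less:
  fixes q :: real
  assumes "q > 0" and "p \<ge> 1" and "q powr (1 / real p) < \<beta>"
  shows "q \<le> \<beta> ^ p"
proof -
  have "q = (q powr (1 / real p)) ^ p"
    using assms(1,2) by (simp add: powr_power powr_powr)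
  also have "\<dots> \<le> \<beta> ^ p"
    using assms(3) by (intro power_mono) auto
  finally show ?thesis .
qed

lemma root_le_if_le_geometric:
  fixes q :: real
  assumes "q > 0" and "K > 0" and "\<beta> > 0" and "q \<le> K * \<beta> ^ n" and "n \<ge> 1"
  shows "q powr (1 / real n) \<le> root n K * \<beta>"
proof -
  have "q powr (1 / real n) \<le> (K * \<beta> ^ n) powr (1 / real n)"
    using assms(1,4) by (intro powr_mono2) auto
  also have "\<dots> = root n K * \<beta>"
    using assms(2,3,5) by (simp add: powr_mult root_powr_inverse powr_realpow[symmetric] powr_powr)
  finally show ?thesis .
qed

text \<open>Fekete's lemma, multiplicative form.\<close>

lemma submultiplicative_root_tendsto_INF:
  fixes q :: "nat \<Rightarrow> real"
  assumes pos: "\<And>n. q n > 0" and sub: "\<And>n m. q (n + m) \<le> q n * q m"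
  shows "(\<lambda>n. q n powr (1 / real n)) \<longlonglongrightarrow> (INF n\<in>{1..}. q n powr (1 / real n))"
    (is "_ \<longlonglongrightarrow> ?L")
proof -
  have bdd: "bdd_below ((\<lambda>n. q n powr (1 / real n)) ` {1..})"
    by (rule bdd_belowI2[of _ 0]) auto
  show ?thesis
  proof (rule order_tendstoI)
    fix a assume "a < ?L"
    then show "\<forall>\<^sub>F n in sequentially. a < q n powr (1 / real n)"
      unfolding eventually_sequentially using bdd
      by (intro exI[of _ 1]) (auto intro: less_le_trans cINF_lower)
  next
    fix c assume c: "?L < c"
    have "0 \<le> ?L"
      by (rule cINF_greatest) auto
    define \<beta> where "\<beta> = (?L + c) / 2"
    have \<beta>: "\<beta> > 0" "?L < \<beta>" "\<beta> < c"
      using \<open>0 \<le> ?L\<close> c unfolding \<beta>_def by auto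
    then obtain p where p: "p \<ge> 1" and qp: "q p powr (1 / real p) < \<beta>"
      using cINF_less_iff[OF _ bdd] by auto
    obtain K where K: "K > 0" "\<And>n. q n \<le> K * \<beta> ^ n"
      using submultiplicative_geometric_bound[OF pos sub p \<beta>(1) le_power_if_root_less[OF pos p qp]]
      by blast
    have "(\<lambda>n. root n K * \<beta>) \<longlonglongrightarrow> 1 * \<beta>"
      using LIMSEQ_root_const[OF K(1)] by (intro tendsto_intros)
    then have "\<forall>\<^sub>F n in sequentially. root n K * \<beta> < c"
      using \<beta>(3) by (intro order_tendstoD(2)) auto
    moreover have "\<forall>\<^sub>F n in sequentially. q n powr (1 / real n) \<le> root n K * \<beta>"
      unfolding eventually_sequentially
      by (intro exI[of _ 1] allI impI root_le_if_le_geometric[OF pos K(1) \<beta>(1) K(2)])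
    ultimately show "\<forall>\<^sub>F n in sequentially. q n powr (1 / real n) < c"
      by eventually_elim auto
  qed
qed

lemma submultiplicative_root_limit_le:
  fixes q :: "nat \<Rightarrow> real"
  assumes pos: "\<And>n. q n > 0" and sub: "\<And>n m. q (n + m) \<le> q n * q m"
    and lim: "(\<lambda>n. q n powr (1 / real n)) \<longlonglongrightarrow> L" and n: "n \<ge> 1"
  shows "L ^ n \<le> q n"
proof -
  have L: "L = (INF n\<in>{1..}. q n powr (1 / real n))"
    using LIMSEQ_unique[OF lim submultiplicative_root_tendsto_INF[OF pos sub]] .
  have "0 \<le> L"
    unfolding L by (rule cINF_greatest) auto
  moreover have "L \<le> q n powr (1 / real n)"
    unfolding L using n by (intro cINF_lower bdd_belowI2[of _ 0]) auto
  ultimately have "L ^ n \<le> (q n powr (1 / real n)) ^ n"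
    by (intro power_mono) auto
  also have "\<dots> = q n"
    using pos[of n] n by (simp add: powr_power powr_powr)
  finally show ?thesis .
qed

lemma submultiplicative_geometric_bound_above_limit:
  fixes q :: "nat \<Rightarrow> real"
  assumes pos: "\<And>n. q n > 0" and sub: "\<And>n m. q (n + m) \<le> q n * q m"
    and lim: "(\<lambda>n. q n powr (1 / real n)) \<longlonglongrightarrow> L" and L: "L < \<rho>"
  shows "\<exists>K>0. \<forall>n. q n \<le> K * \<rho> ^ n"
proof -
  have "0 \<le> L"
    using lim by (rule LIMSEQ_le_const) auto
  have "\<forall>\<^sub>F n in sequentially. q n powr (1 / real n) < \<rho>"
    using lim L by (rule order_tendstoD(2))
  then obtain p where p: "p \<ge> 1" and qp: "q p powr (1 / real p) < \<rho>"
    unfolding eventually_sequentially by (metis le_add2 add.commute)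
  show ?thesis
    using submultiplicative_geometric_bound[OF pos sub p _ le_power_if_root_less[OF pos p qp]]
      \<open>0 \<le> L\<close> L by auto
qed

section \<open>Humps and trapezoids\<close>

lemma iterated_doubling:
  fixes t :: "nat \<Rightarrow> real"
  assumes doubling: "\<And>j b. K \<le> j \<Longrightarrow> j + d \<le> b \<Longrightarrow> 2 * t j < t b"
    and "K \<le> j" and "j + Suc q * d \<le> b"
  shows "2 ^ Suc q * t j \<le> t b"
  using assms(2,3)
proof (induction q arbitrary: j)
  case 0
  then show ?case
    using doubling[of j b] by force
next
  case (Suc q)
  have "2 ^ Suc q * t (j + d) \<le> t b"
    using Suc.IH[of "j + d"] Suc.prems by (simp add: algebra_simps)
  moreover have "2 ^ Suc q * (2 * t j) \<le> 2 ^ Suc q * t (j + d)"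
    using doubling[of j "j + d"] Suc.prems by (intro mult_left_mono) auto
  ultimately show ?case
    by (simp only: power_Suc[of 2 "Suc q"] mult.assoc)
qed

lemma not_eventually_doubling:
  fixes t :: "nat \<Rightarrow> real"
  assumes t_pos: "\<And>k. t k > 0" and no_halving: "\<And>m. \<exists>j. t (j + m) < 2 * t j"
  shows "\<exists>j b. K \<le> j \<and> j + d \<le> b \<and> t b \<le> 2 * t j"
proof (rule ccontr)
  assume "\<not> ?thesis"
  then have doubling: "\<And>j b. K \<le> j \<Longrightarrow> j + d \<le> b \<Longrightarrow> 2 * t j < t b"
    by (meson not_le)
  obtain Q :: nat where Q: "(\<Sum>i<K. t i) < 2 ^ Q * t K"
    using real_arch_pow[of 2 "(\<Sum>i<K. t i) / t K"] t_pos[of K] by (auto simp: field_simps)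
  obtain j where j: "t (j + (K + Suc Q * d)) < 2 * t j"
    using no_halving by blast
  show False
  proof (cases "K \<le> j")
    case True
    then show False
      using j doubling[of j "j + (K + Suc Q * d)"] by simp
  next
    case False
    then have "t j \<le> (\<Sum>i<K. t i)"
      using t_pos by (intro member_le_sum) (auto intro: less_imp_le)
    moreover have "2 ^ Suc Q * t K \<le> t (j + (K + Suc Q * d))"
      by (rule iterated_doubling[OF doubling]) auto
    ultimately show False
      using j Q by simp
  qed
qed

lemma exists_hump:
  fixes t :: "nat \<Rightarrow> real"
  assumes t_pos: "\<And>k. t k > 0"
    and no_doubling: "\<And>m. \<exists>j. t j < 2 * t (j + m)"
    and no_halving: "\<And>m. \<exists>j. t (j + m) < 2 * t j"
  shows "\<exists>a p b. a + d \<le> p \<and> p + d \<le> b \<and> t a \<le> 2 * t p \<and> t b \<le> 2 * t p"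
proof (rule ccontr)
  assume "\<not> ?thesis"
  then have no_hump: "\<And>a p b. a + d \<le> p \<Longrightarrow> p + d \<le> b \<Longrightarrow> 2 * t p < t a \<or> 2 * t p < t b"
    by (meson not_le)
  define left where "left p \<longleftrightarrow> (\<forall>a. a + d \<le> p \<longrightarrow> 2 * t p < t a)" for p
  define right where "right p \<longleftrightarrow> (\<forall>b. p + d \<le> b \<longrightarrow> 2 * t p < t b)" for p
  have left_or_right: "left p \<or> right p" for p
    unfolding left_def right_def using no_hump by (meson not_le)
  show False
  proof (cases "\<exists>k. right k")
    case True
    then obtain k0 where "right k0"
      by blast
    have "right k" if "k0 + d \<le> k" for k
    proof (rule ccontr)
      assume "\<not> right k"
      then have "2 * t k < t k0"
        using left_or_right that unfolding left_def by auto
      moreover have "2 * t k0 < t k"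
        using \<open>right k0\<close> that unfolding right_def by auto
      ultimately show False
        using t_pos[of k0] by linarith
    qed
    then show False
      using not_eventually_doubling[OF t_pos no_halving, of "k0 + d" d] unfolding right_def
      by (meson not_le)
  next
    case False
    obtain j where "t j < 2 * t (j + d)"
      using no_doubling by blast
    moreover have "2 * t (j + d) < t j"
      using False left_or_right[of "j + d"] unfolding left_def by auto
    ultimately show False
      by linarith
  qed
qed

definition geom_block :: "real \<Rightarrow> nat \<Rightarrow> nat \<Rightarrow> seq" where
  "geom_block l a b j = (if a \<le> j \<and> j < b then 1 / l ^ j else 0)"

lemma geom_block_eq_sum: "geom_block l a b = (\<Sum>k\<in>{a..<b}. (\<lambda>j. (1 / l ^ k) * unitv k j))"
proof
  fix j
  have "(\<Sum>k\<in>{a..<b}. (1 / l ^ k) * unitv k j) = (\<Sum>k\<in>{a..<b}. if j = k then 1 / l ^ k else 0)"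
    by (intro sum.cong) (auto simp: unitv_def)
  then show "geom_block l a b j = (\<Sum>k\<in>{a..<b}. (\<lambda>j. (1 / l ^ k) * unitv k j)) j"
    unfolding sum_apply geom_block_def by (simp add: sum.delta)
qed

text \<open>\<open>T\<^sub>\<lambda>\<close> annihilates \<open>(\<lambda>\<^sup>-\<^sup>j)\<^sub>j\<close> except at \<open>j = 0\<close>, so cutting it off to \<open>[a, b)\<close>
  only creates errors at the two ends.\<close>

lemma Tlam_geom_block:
  assumes "a < b" and "l \<noteq> 0"
  shows "Tlam l (geom_block l a b) = (\<lambda>j. (- l / l ^ a) * unitv a j) + (\<lambda>j. (l / l ^ b) * unitv b j)"
proof
  fix j
  show "Tlam l (geom_block l a b) j = ((\<lambda>j. (- l / l ^ a) * unitv a j) + (\<lambda>j. (l / l ^ b) * unitv b j)) j"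
    using assms by (cases j) (auto simp: geom_block_def unitv_def)
qed

definition trapezoid :: "nat \<Rightarrow> nat \<Rightarrow> nat \<Rightarrow> real \<Rightarrow> real" where
  "trapezoid a b n y = max 0 (min 1 (min ((y + 1 - real a) / n) ((real b - 1 - y) / n)))"

lemma trapezoid_bounds: "0 \<le> trapezoid a b n y" "trapezoid a b n y \<le> 1"
  unfolding trapezoid_def by auto

lemma trapezoid_eq_0:
  assumes "n > 0" and "y + 1 \<le> real a \<or> real b \<le> y + 1"
  shows "trapezoid a b n y = 0"
proof -
  have "min ((y + 1 - real a) / n) ((real b - 1 - y) / n) \<le> 0"
    using assms by (auto simp: divide_nonpos_pos min_le_iff_disj)
  then show ?thesis
    unfolding trapezoid_def by auto
qed

lemma trapezoid_eq_1: "n > 0 \<Longrightarrow> a + n \<le> p \<Longrightarrow> p + Suc n \<le> b \<Longrightarrow> trapezoid a b n (real p) = 1"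
  unfolding trapezoid_def by (auto simp: field_simps min_def max_def)

lemma trapezoid_lipschitz:
  assumes "n > 0"
  shows "\<bar>trapezoid a b n y - trapezoid a b n (y + 1)\<bar> \<le> 1 / n"
proof -
  have clamp: "\<bar>max 0 (min 1 (min u v)) - max 0 (min 1 (min (u + h) (v - h)))\<bar> \<le> h"
    if "h \<ge> 0" for u v h :: real
    using that by (simp add: min_def max_def abs_if)
  have "trapezoid a b n (y + 1)
      = max 0 (min 1 (min ((y + 1 - real a) / n + 1 / n) ((real b - 1 - y) / n - 1 / n)))"
    unfolding trapezoid_def by (simp add: add_divide_distrib diff_divide_distrib algebra_simps)
  then show ?thesis
    unfolding trapezoid_def[of a b n y] using clamp[of "1 / n"] assms by simp
qed

lemma abs_Tlam_trapezoid_le: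
  fixes l :: real
  assumes l: "l > 0" and n: "n > 0" and ab: "a < b"
  shows "\<bar>Tlam l (\<lambda>k. trapezoid a b n (real k) / l ^ k) k\<bar> \<le> (l / n) * geom_block l a b k"
proof (cases k)
  case 0
  show ?thesis
  proof (cases "a = 0")
    case True
    have "trapezoid a b n 0 \<le> 1 / n"
      unfolding trapezoid_def using True by (auto simp: min_le_iff_disj)
    then have "l * trapezoid a b n 0 \<le> l / n"
      using mult_left_mono[of _ _ l] l by fastforce
    then show ?thesis
      using 0 True ab l n trapezoid_bounds[of a b n 0] by (simp add: geom_block_def)
  next
    case False
    then show ?thesis
      using 0 l n by (simp add: trapezoid_eq_0 geom_block_def)
  qed
next
  case (Suc m)
  have T: "Tlam l (\<lambda>k. trapezoid a b n (real k) / l ^ k) k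
      = (trapezoid a b n (real m) - trapezoid a b n (real m + 1)) / l ^ m"
    unfolding Suc using l by (simp add: field_simps)
  show ?thesis
  proof (cases "a \<le> k \<and> k < b")
    case True
    have "\<bar>trapezoid a b n (real m) - trapezoid a b n (real m + 1)\<bar> / l ^ m \<le> (1 / n) / l ^ m"
      using trapezoid_lipschitz[OF n] l by (intro divide_right_mono) auto
    also have "\<dots> = (l / n) * geom_block l a b k"
      using True l unfolding Suc by (simp add: geom_block_def field_simps)
    finally show ?thesis
      unfolding T using l by (simp add: abs_divide)
  next
    case False
    then show ?thesis
      unfolding T using Suc n by (auto simp: trapezoid_eq_0 geom_block_def)
  qed
qed

locale seq_lattice =
  fixes E :: "seq set" and N :: "seq \<Rightarrow> real"
  assumes lattice: "banach_seq_lattice E N"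
    and unitv_mem: "\<And>k. unitv k \<in> E"
begin

lemma zero_mem: "0 \<in> E"
  using lattice by (simp add: banach_seq_lattice_def)

lemma add_mem: "x \<in> E \<Longrightarrow> y \<in> E \<Longrightarrow> x + y \<in> E"
  using lattice by (simp add: banach_seq_lattice_def)

lemma scale_mem: "x \<in> E \<Longrightarrow> (\<lambda>k. c * x k) \<in> E"
  using lattice by (simp add: banach_seq_lattice_def)

lemma N_nonneg: "x \<in> E \<Longrightarrow> N x \<ge> 0"
  using lattice by (simp add: banach_seq_lattice_def)

lemma N_eq_0_iff: "x \<in> E \<Longrightarrow> N x = 0 \<longleftrightarrow> x = 0"
  using lattice by (simp add: banach_seq_lattice_def)

lemma N_scale: "x \<in> E \<Longrightarrow> N (\<lambda>k. c * x k) = \<bar>c\<bar> * N x"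
  using lattice by (simp add: banach_seq_lattice_def)

lemma N_triangle: "x \<in> E \<Longrightarrow> y \<in> E \<Longrightarrow> N (x + y) \<le> N x + N y"
  using lattice by (simp add: banach_seq_lattice_def)

lemma dominated: "x \<in> E \<Longrightarrow> (\<And>k. \<bar>y k\<bar> \<le> \<bar>x k\<bar>) \<Longrightarrow> y \<in> E \<and> N y \<le> N x"
  using lattice unfolding banach_seq_lattice_def by blast

lemma Cauchy_convergent:
  assumes "\<And>j. f j \<in> E" and "\<And>\<epsilon>. \<epsilon> > 0 \<Longrightarrow> \<exists>M. \<forall>i\<ge>M. \<forall>j\<ge>M. N (f i - f j) < \<epsilon>"
  shows "\<exists>z\<in>E. (\<lambda>j. N (f j - z)) \<longlonglongrightarrow> 0"
  using lattice assms unfolding banach_seq_lattice_def by blast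

lemma N_zero: "N 0 = 0"
  using N_eq_0_iff zero_mem by blast

lemma uminus_mem: "x \<in> E \<Longrightarrow> - x \<in> E"
  using scale_mem[of x "-1"] by (simp add: fun_Compl_def)

lemma N_uminus: "x \<in> E \<Longrightarrow> N (- x) = N x"
  using N_scale[of x "-1"] by (simp add: fun_Compl_def)

lemma diff_mem: "x \<in> E \<Longrightarrow> y \<in> E \<Longrightarrow> x - y \<in> E"
  by (metis add_mem diff_conv_add_uminus uminus_mem)

lemma N_diff_le: "x \<in> E \<Longrightarrow> y \<in> E \<Longrightarrow> N (x - y) \<le> N x + N y"
  by (metis N_triangle N_uminus diff_conv_add_uminus uminus_mem)

lemma N_diff_commute: "x \<in> E \<Longrightarrow> y \<in> E \<Longrightarrow> N (x - y) = N (y - x)"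
  by (metis N_uminus diff_mem minus_diff_eq)

lemma abs_mem: "x \<in> E \<Longrightarrow> (\<lambda>k. \<bar>x k\<bar>) \<in> E"
  using dominated[of x "\<lambda>k. \<bar>x k\<bar>"] by force

lemma N_abs: "x \<in> E \<Longrightarrow> N (\<lambda>k. \<bar>x k\<bar>) = N x"
  using dominated[of x "\<lambda>k. \<bar>x k\<bar>"] dominated[of "\<lambda>k. \<bar>x k\<bar>" x] by force

lemma sum_mem: "(\<And>i. i \<in> I \<Longrightarrow> f i \<in> E) \<Longrightarrow> (\<Sum>i\<in>I. f i) \<in> E"
  by (induction I rule: infinite_finite_induct) (auto simp: zero_mem add_mem)

lemma N_sum_le: "(\<And>i. i \<in> I \<Longrightarrow> f i \<in> E) \<Longrightarrow> N (\<Sum>i\<in>I. f i) \<le> (\<Sum>i\<in>I. N (f i))"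
proof (induction I rule: infinite_finite_induct)
  case (insert i I)
  have "N (f i + sum f I) \<le> N (f i) + N (sum f I)"
    using insert.prems by (intro N_triangle sum_mem) auto
  also have "\<dots> \<le> N (f i) + (\<Sum>i\<in>I. N (f i))"
    using insert.IH insert.prems by simp
  finally show ?case
    by (simp only: sum.insert[OF insert.hyps])
qed (simp_all add: N_zero)

definition s :: "nat \<Rightarrow> real" where
  "s k = N (unitv k)"

lemma s_pos: "s k > 0"
  unfolding s_def using unitv_mem N_eq_0_iff N_nonneg unitv_nonzero by (metis less_eq_real_def)

lemma scaled_unitv_mem: "(\<lambda>j. c * unitv k j) \<in> E"
  using unitv_mem scale_mem by blast

lemma N_scaled_unitv: "N (\<lambda>j. c * unitv k j) = \<bar>c\<bar> * s k"
  using unitv_mem N_scale s_def by simp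

lemma abs_coord_le: "x \<in> E \<Longrightarrow> \<bar>x k\<bar> * s k \<le> N x"
  using dominated[of x "\<lambda>j. x k * unitv k j"] N_scaled_unitv[of "x k" k]
  by (auto simp: unitv_def)

lemma coord_tendsto:
  assumes "\<And>j. f j \<in> E" "z \<in> E" "(\<lambda>j. N (f j - z)) \<longlonglongrightarrow> 0"
  shows "(\<lambda>j. f j k) \<longlonglongrightarrow> z k"
proof -
  have bound: "norm (f j k - z k) \<le> N (f j - z) / s k" for j
  proof -
    have "\<bar>(f j - z) k\<bar> * s k \<le> N (f j - z)"
      using abs_coord_le[OF diff_mem[OF assms(1)[of j] assms(2)]] .
    then show ?thesis
      using s_pos[of k] by (simp add: pos_le_divide_eq)
  qed
  have "(\<lambda>j. f j k - z k) \<longlonglongrightarrow> 0"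
    using Lim_null_comparison[OF always_eventually[OF allI[OF bound]] tendsto_divide_zero[OF assms(3)]] .
  then show ?thesis
    by (simp add: LIM_zero_iff)
qed

lemma N_partial_sums_diff_le:
  fixes i j :: nat
  assumes f: "\<And>n. f n \<in> E" and "j \<le> i"
  shows "N ((\<Sum>n<i. f n) - (\<Sum>n<j. f n)) \<le> (\<Sum>n\<in>{j..<i}. N (f n))"
proof -
  have "(\<Sum>n<i. f n) = (\<Sum>n<j. f n) + (\<Sum>n\<in>{j..<i}. f n)"
    using sum.atLeastLessThan_concat[of 0 j i f] \<open>j \<le> i\<close> by (simp add: atLeast0LessThan)
  then have "(\<Sum>n<i. f n) - (\<Sum>n<j. f n) = (\<Sum>n\<in>{j..<i}. f n)"
    by simp
  then show ?thesis
    using f by (simp add: N_sum_le)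
qed

lemma partial_sums_Cauchy:
  assumes f: "\<And>n. f n \<in> E" and sm: "summable (\<lambda>n. N (f n))" and "e > 0"
  shows "\<exists>M. \<forall>i\<ge>M. \<forall>j\<ge>M. N ((\<Sum>n<i. f n) - (\<Sum>n<j. f n)) < e"
proof -
  obtain M where M: "\<And>m n. m \<ge> M \<Longrightarrow> norm (\<Sum>k\<in>{m..<n}. N (f k)) < e"
    using sm \<open>e > 0\<close> unfolding summable_Cauchy by blast
  have small: "N ((\<Sum>n<i. f n) - (\<Sum>n<j. f n)) < e" if "j \<ge> M" "j \<le> i" for i j
    using N_partial_sums_diff_le[of f, OF f \<open>j \<le> i\<close>] M[of j i] that by simp
  have "N ((\<Sum>n<i. f n) - (\<Sum>n<j. f n)) < e" if "i \<ge> M" "j \<ge> M" for i j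
  proof (cases "j \<le> i")
    case True
    then show ?thesis
      using small that by blast
  next
    case False
    have "N ((\<Sum>n<i. f n) - (\<Sum>n<j. f n)) = N ((\<Sum>n<j. f n) - (\<Sum>n<i. f n))"
      using f by (intro N_diff_commute sum_mem)
    then show ?thesis
      using small[of i j] that False by simp
  qed
  then show ?thesis
    by blast
qed

lemma summable_N_imp_convergent:
  assumes f: "\<And>n. f n \<in> E" and sm: "summable (\<lambda>n. N (f n))"
  shows "\<exists>z\<in>E. (\<lambda>K. N ((\<Sum>n<K. f n) - z)) \<longlonglongrightarrow> 0 \<and> N z \<le> (\<Sum>n. N (f n))
    \<and> (\<forall>j. (\<lambda>n. f n j) sums z j)"
proof -
  define S where "S K = (\<Sum>n<K. f n)" for K
  have S_mem: "S K \<in> E" for K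
    unfolding S_def using f by (intro sum_mem)
  have "\<exists>z\<in>E. (\<lambda>j. N (S j - z)) \<longlonglongrightarrow> 0"
  proof (rule Cauchy_convergent[OF S_mem])
    fix e :: real assume "e > 0"
    then show "\<exists>M. \<forall>i\<ge>M. \<forall>j\<ge>M. N (S i - S j) < e"
      unfolding S_def by (rule partial_sums_Cauchy[OF f sm])
  qed
  then obtain z where z: "z \<in> E" "(\<lambda>j. N (S j - z)) \<longlonglongrightarrow> 0"
    by blast
  have "N z \<le> N (S K - z) + (\<Sum>n. N (f n))" for K
  proof -
    have "N (S K - (S K - z)) \<le> N (S K) + N (S K - z)"
      using N_diff_le[OF S_mem diff_mem[OF S_mem z(1)]] .
    moreover have "N (S K) \<le> (\<Sum>n<K. N (f n))"
      unfolding S_def using f by (simp add: N_sum_le)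
    moreover have "(\<Sum>n<K. N (f n)) \<le> (\<Sum>n. N (f n))"
      using sm f N_nonneg by (intro sum_le_suminf) auto
    ultimately show ?thesis
      by simp
  qed
  moreover have "(\<lambda>K. N (S K - z) + (\<Sum>n. N (f n))) \<longlonglongrightarrow> 0 + (\<Sum>n. N (f n))"
    by (intro tendsto_intros z(2))
  ultimately have "N z \<le> (\<Sum>n. N (f n))"
    by (intro LIMSEQ_le_const) auto
  moreover have "(\<lambda>n. f n j) sums z j" for j
  proof -
    have "(\<lambda>K. S K j) \<longlonglongrightarrow> z j"
      by (rule coord_tendsto[OF S_mem z])
    then show ?thesis
      unfolding S_def sums_def sum_apply .
  qed
  ultimately show ?thesis
    using z unfolding S_def by blast
qed

lemma geometric_series_limit:
  assumes f: "\<And>n. f n \<in> E" and bound: "\<And>n. N (f n) \<le> B * q ^ n" and q: "0 \<le> q" "q < 1"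
  shows "\<exists>z\<in>E. N z \<le> B / (1 - q) \<and> (\<forall>j. (\<lambda>n. f n j) sums z j)"
proof -
  have geom: "(\<lambda>n. B * q ^ n) sums (B / (1 - q))"
    using sums_mult[OF geometric_sums[of q], of B] q by simp
  have sm: "summable (\<lambda>n. N (f n))"
    by (rule summable_comparison_test'[OF sums_summable[OF geom], of 0]) (use bound N_nonneg f in auto)
  have "(\<Sum>n. N (f n)) \<le> B / (1 - q)"
    using suminf_le[OF bound sm sums_summable[OF geom]] sums_unique[OF geom] by simp
  moreover obtain z where "z \<in> E" "N z \<le> (\<Sum>n. N (f n))" "\<forall>j. (\<lambda>n. f n j) sums z j"
    using summable_N_imp_convergent[OF f sm] by blast
  ultimately show ?thesis
    by (intro bexI[of _ z]) auto
qed

end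

locale shift_lattice = seq_lattice +
  assumes tau_bounded: "\<And>n. bounded_on E N (tau n)"
begin

lemma tau_mem: "x \<in> E \<Longrightarrow> tau n x \<in> E"
  using tau_bounded unfolding bounded_on_def by blast

lemma opnorm_tau_bdd: "bdd_above {N (tau n x) |x. x \<in> E \<and> N x \<le> 1}"
proof -
  obtain C where C: "\<And>x. x \<in> E \<Longrightarrow> N (tau n x) \<le> C * N x"
    using tau_bounded unfolding bounded_on_def by blast
  have "N (tau n x) \<le> max C 0" if "x \<in> E" "N x \<le> 1" for x
  proof -
    have "C * N x \<le> max C 0 * N x"
      using N_nonneg[OF that(1)] by (intro mult_right_mono) auto
    also have "\<dots> \<le> max C 0"
      using that(2) N_nonneg[OF that(1)] by (simp add: mult_left_le)
    finally show ?thesis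
      using C[OF that(1)] by simp
  qed
  then show ?thesis
    by (intro bdd_aboveI[of _ "max C 0"]) auto
qed

lemma N_tau_le:
  assumes x: "x \<in> E"
  shows "N (tau n x) \<le> opnorm E N (tau n) * N x"
proof (cases "x = 0")
  case True
  then show ?thesis
    by (simp add: tau_zero N_zero)
next
  case False
  then have Nx: "N x > 0"
    using x N_eq_0_iff N_nonneg by (metis less_eq_real_def)
  define y where "y = (\<lambda>k. (1 / N x) * x k)"
  have "y \<in> E" and "N y = 1"
    unfolding y_def using scale_mem[OF x, of "1 / N x"] N_scale[OF x, of "1 / N x"] Nx by simp_all
  then have "N (tau n y) \<le> opnorm E N (tau n)"
    unfolding opnorm_def by (intro cSup_upper opnorm_tau_bdd) auto
  moreover have "N (tau n y) = N (tau n x) / N x"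
    unfolding y_def tau_scale using N_scale[OF tau_mem[OF x], of "1 / N x"] Nx by simp
  ultimately show ?thesis
    using Nx by (simp add: field_simps)
qed

lemma s_shift_le: "0 \<le> int k + n \<Longrightarrow> s (nat (int k + n)) \<le> opnorm E N (tau n) * s k"
  using N_tau_le[OF unitv_mem[of k], of n] unfolding s_def by (simp add: tau_unitv)

lemma opnorm_tau_pos: "opnorm E N (tau n) > 0"
proof -
  have "0 < s (nat (int (nat \<bar>n\<bar>) + n))"
    by (rule s_pos)
  also have "\<dots> \<le> opnorm E N (tau n) * s (nat \<bar>n\<bar>)"
    by (rule s_shift_le) simp
  finally show ?thesis
    using s_pos[of "nat \<bar>n\<bar>"] by (simp add: zero_less_mult_iff)
qed

lemma opnorm_tau_add:
  assumes "0 \<le> n \<and> 0 \<le> m \<or> n \<le> 0 \<and> m \<le> 0"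
  shows "opnorm E N (tau (n + m)) \<le> opnorm E N (tau n) * opnorm E N (tau m)"
  unfolding opnorm_def[of E N "tau (n + m)"]
proof (rule cSup_least)
  show "{N (tau (n + m) x) |x. x \<in> E \<and> N x \<le> 1} \<noteq> {}"
    using zero_mem N_zero by force
next
  fix y assume "y \<in> {N (tau (n + m) x) |x. x \<in> E \<and> N x \<le> 1}"
  then obtain x where x: "x \<in> E" "N x \<le> 1" and y: "y = N (tau n (tau m x))"
    using tau_tau[OF assms] by auto
  have "y \<le> opnorm E N (tau n) * N (tau m x)"
    unfolding y using N_tau_le tau_mem x by blast
  also have "\<dots> \<le> opnorm E N (tau n) * (opnorm E N (tau m) * N x)"
    using N_tau_le[OF x(1)] opnorm_tau_pos by (intro mult_left_mono) (auto intro: less_imp_le)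
  also have "\<dots> \<le> opnorm E N (tau n) * opnorm E N (tau m)"
    using x(2) N_nonneg[OF x(1)] opnorm_tau_pos[of n] opnorm_tau_pos[of m]
    by (simp add: mult_left_le)
  finally show "y \<le> opnorm E N (tau n) * opnorm E N (tau m)" .
qed

lemma opnorm_tau_multiple_submult:
  "opnorm E N (tau (int (n + m) * d)) \<le> opnorm E N (tau (int n * d)) * opnorm E N (tau (int m * d))"
proof -
  have "0 \<le> int n * d \<and> 0 \<le> int m * d \<or> int n * d \<le> 0 \<and> int m * d \<le> 0"
    by (cases "0 \<le> d") (simp_all add: mult_nonneg_nonpos)
  from opnorm_tau_add[OF this] show ?thesis
    by (simp add: distrib_right)
qed

lemma opnorm_tau_multiple_root_tendsto:
  "(\<lambda>n. opnorm E N (tau (int n * d)) powr (1 / real n))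
     \<longlonglongrightarrow> lim (\<lambda>n. opnorm E N (tau (int n * d)) powr (1 / real n))"
proof -
  have "convergent (\<lambda>n. opnorm E N (tau (int n * d)) powr (1 / real n))"
    using submultiplicative_root_tendsto_INF[of "\<lambda>n. opnorm E N (tau (int n * d))",
        OF opnorm_tau_pos opnorm_tau_multiple_submult] by (rule convergentI)
  then show ?thesis
    by (simp add: convergent_LIMSEQ_iff)
qed

lemma k_plus_tendsto: "(\<lambda>n. opnorm E N (tau (int n)) powr (1 / real n)) \<longlonglongrightarrow> k_plus E N"
  using opnorm_tau_multiple_root_tendsto[of 1] unfolding k_plus_def by simp

lemma k_minus_tendsto: "(\<lambda>n. opnorm E N (tau (- int n)) powr (1 / real n)) \<longlonglongrightarrow> k_minus E N"
  using opnorm_tau_multiple_root_tendsto[of "-1"] unfolding k_minus_def by simp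

lemma k_plus_nonneg: "k_plus E N \<ge> 0"
  using k_plus_tendsto by (rule LIMSEQ_le_const) auto

lemma k_minus_nonneg: "k_minus E N \<ge> 0"
  using k_minus_tendsto by (rule LIMSEQ_le_const) auto

lemma N_tau_multiple_geometric_bound:
  assumes "(\<lambda>n. opnorm E N (tau (int n * d)) powr (1 / real n)) \<longlonglongrightarrow> L" and "L < \<rho>"
  shows "\<exists>K>0. \<forall>n. \<forall>x\<in>E. N (tau (int n * d) x) \<le> K * \<rho> ^ n * N x"
proof -
  obtain K where "K > 0" and K: "\<And>n. opnorm E N (tau (int n * d)) \<le> K * \<rho> ^ n"
    using submultiplicative_geometric_bound_above_limit[of "\<lambda>n. opnorm E N (tau (int n * d))",
        OF opnorm_tau_pos
        opnorm_tau_multiple_submult assms] by blast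
  have "N (tau (int n * d) x) \<le> K * \<rho> ^ n * N x" if "x \<in> E" for n x
    using N_tau_le[OF that] K[of n] N_nonneg[OF that] by (meson mult_right_mono order_trans)
  with \<open>K > 0\<close> show ?thesis
    by blast
qed

lemma N_tau_geometric_bound_above_k_plus:
  "k_plus E N < \<rho> \<Longrightarrow> \<exists>K>0. \<forall>n. \<forall>x\<in>E. N (tau (int n) x) \<le> K * \<rho> ^ n * N x"
  using N_tau_multiple_geometric_bound[of 1] k_plus_tendsto by simp

lemma N_tau_geometric_bound_above_k_minus:
  "k_minus E N < \<rho> \<Longrightarrow> \<exists>K>0. \<forall>n. \<forall>x\<in>E. N (tau (- int n) x) \<le> K * \<rho> ^ n * N x"
  using N_tau_multiple_geometric_bound[of "-1"] k_minus_tendsto by simp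

lemma Tlam_mem: "x \<in> E \<Longrightarrow> Tlam l x \<in> E"
  unfolding Tlam_eq by (intro add_mem tau_mem scale_mem)

lemma N_Tlam_le:
  assumes "x \<in> E"
  shows "N (Tlam l x) \<le> (opnorm E N (tau 1) + \<bar>l\<bar>) * N x"
proof -
  have "N (Tlam l x) \<le> N (tau 1 x) + N (\<lambda>k. (- l) * x k)"
    unfolding Tlam_eq using assms by (intro N_triangle tau_mem scale_mem)
  also have "\<dots> \<le> opnorm E N (tau 1) * N x + \<bar>l\<bar> * N x"
    using N_tau_le[OF assms, of 1] N_scale[OF assms, of "-l"] by simp
  finally show ?thesis
    by (simp add: algebra_simps)
qed

section \<open>Closedness of the range of \<open>T\<^sub>\<lambda>\<close>\<close>

lemma Tlam_limit:
  assumes x: "\<And>j. x j \<in> E" and w: "w \<in> E" "(\<lambda>j. N (x j - w)) \<longlonglongrightarrow> 0"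
    and z: "z \<in> E" "(\<lambda>j. N (Tlam l (x j) - z)) \<longlonglongrightarrow> 0"
  shows "Tlam l w = z"
proof -
  define C where "C = opnorm E N (tau 1) + \<bar>l\<bar>"
  have "N (Tlam l w - z) \<le> C * N (x j - w) + N (Tlam l (x j) - z)" for j
  proof -
    have "N (Tlam l w - z) = N (Tlam l (w - x j) + (Tlam l (x j) - z))"
      by (simp add: Tlam_diff)
    also have "\<dots> \<le> N (Tlam l (w - x j)) + N (Tlam l (x j) - z)"
      using w(1) x z(1) by (intro N_triangle Tlam_mem diff_mem)
    also have "N (Tlam l (w - x j)) \<le> C * N (x j - w)"
      unfolding C_def using N_Tlam_le[OF diff_mem[OF w(1) x]] N_diff_commute[OF w(1) x] by simp
    finally show ?thesis
      by (simp only: add_le_cancel_right)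
  qed
  moreover have "(\<lambda>j. C * N (x j - w) + N (Tlam l (x j) - z)) \<longlonglongrightarrow> C * 0 + 0"
    by (intro tendsto_intros w(2) z(2))
  ultimately have "N (Tlam l w - z) \<le> 0"
    by (intro LIMSEQ_le_const[where X = "\<lambda>j. C * N (x j - w) + N (Tlam l (x j) - z)"]) auto
  then show "Tlam l w = z"
    using N_nonneg N_eq_0_iff diff_mem[OF Tlam_mem[OF w(1)] z(1)] by force
qed

lemma closed_range_if_bounded_below:
  assumes c: "c > 0" and below: "\<And>x. x \<in> E \<Longrightarrow> c * N x \<le> N (Tlam l x)"
  shows "N_closed E N (Tlam l ` E)"
  unfolding N_closed_def
proof (intro allI impI, elim conjE)
  fix f z
  assume f_range: "\<forall>j. f j \<in> Tlam l ` E" and z: "z \<in> E" and lim: "(\<lambda>j. N (f j - z)) \<longlonglongrightarrow> 0"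
  then have "\<forall>j. \<exists>y. y \<in> E \<and> f j = Tlam l y"
    by blast
  then obtain x where x: "\<And>j. x j \<in> E" and f: "\<And>j. f j = Tlam l (x j)"
    by metis
  have "\<exists>w\<in>E. (\<lambda>j. N (x j - w)) \<longlonglongrightarrow> 0"
  proof (rule Cauchy_convergent[OF x])
    fix e :: real assume "e > 0"
    then have "\<forall>\<^sub>F j in sequentially. N (f j - z) < c * e / 2"
      using lim c by (intro order_tendstoD(2)) auto
    then obtain M where M: "\<And>j. j \<ge> M \<Longrightarrow> N (f j - z) < c * e / 2"
      unfolding eventually_sequentially by blast
    have "N (x i - x j) < e" if "i \<ge> M" "j \<ge> M" for i j
    proof -
      have "c * N (x i - x j) \<le> N ((f i - z) - (f j - z))"
        using below[OF diff_mem[OF x x]] by (simp add: Tlam_diff f)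
      also have "\<dots> \<le> N (f i - z) + N (f j - z)"
        using x z unfolding f by (intro N_diff_le diff_mem Tlam_mem)
      also have "\<dots> < c * e"
        using M[OF that(1)] M[OF that(2)] by simp
      finally show ?thesis
        using c by simp
    qed
    then show "\<exists>M. \<forall>i\<ge>M. \<forall>j\<ge>M. N (x i - x j) < e"
      by blast
  qed
  then obtain w where w: "w \<in> E" "(\<lambda>j. N (x j - w)) \<longlonglongrightarrow> 0"
    by blast
  have "Tlam l w = z"
    using Tlam_limit[where x = x and l = l, OF x w z lim[unfolded f]] .
  with w(1) show "z \<in> Tlam l ` E"
    by blast
qed

lemma scaled_approx_eigenvectors:
  assumes approx: "\<And>c. c > 0 \<Longrightarrow> \<exists>x\<in>E. (\<forall>k. 0 \<le> x k) \<and> N (Tlam l x) < c * N x"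
  obtains y where "\<And>k. y k \<in> E" "\<And>k j. 0 \<le> y k j"
    "\<And>k. N (y k) = 2 ^ k" "\<And>k. N (Tlam l (y k)) \<le> (1/2) ^ k"
proof -
  have "\<exists>x. x \<in> E \<and> (\<forall>j. 0 \<le> x j) \<and> N (Tlam l x) < (1/4) ^ k * N x" for k
    using approx[of "(1/4) ^ k"] by auto
  then obtain X where X: "\<And>k. X k \<in> E" "\<And>k j. 0 \<le> X k j" "\<And>k. N (Tlam l (X k)) < (1/4) ^ k * N (X k)"
    by metis
  have N_X: "N (X k) > 0" for k
    using X(3)[of k] N_nonneg[OF Tlam_mem[OF X(1)], of l k] N_nonneg[OF X(1), of k]
    by (smt (verit) zero_le_power zero_less_divide_1_iff mult_nonneg_nonpos)
  define y where "y k = (\<lambda>j. (2 ^ k / N (X k)) * X k j)" for k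
  have "N (Tlam l (y k)) \<le> (1/2) ^ k" for k
  proof -
    have "N (Tlam l (y k)) = (2 ^ k / N (X k)) * N (Tlam l (X k))"
      unfolding y_def Tlam_scale using N_scale[OF Tlam_mem[OF X(1)], of "2 ^ k / N (X k)" l k] N_X[of k]
      by simp
    also have "\<dots> \<le> (2 ^ k / N (X k)) * ((1/4) ^ k * N (X k))"
      using N_X[of k] X(3)[of k] by (intro mult_left_mono) auto
    also have "\<dots> = (1/2) ^ k"
      using N_X[of k] by (simp add: field_simps power_divide flip: power_mult_distrib)
    finally show ?thesis .
  qed
  moreover have "y k \<in> E" for k
    unfolding y_def using scale_mem X(1) by blast
  moreover have "0 \<le> y k j" for k j
    unfolding y_def using X(2) N_X by (intro mult_nonneg_nonneg divide_nonneg_pos) auto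
  moreover have "N (y k) = 2 ^ k" for k
    unfolding y_def using N_scale[OF X(1), of "2 ^ k / N (X k)" k] N_X[of k] by simp
  ultimately show ?thesis
    using that by blast
qed

text \<open>If the range were closed, \<open>\<Sum> T\<^sub>\<lambda> y\<^sub>k = T\<^sub>\<lambda> w\<close> for some \<open>w \<in> E\<close>; as \<open>T\<^sub>\<lambda>\<^sup>-\<^sup>1\<close> is
  coordinatewise continuous, \<open>w = \<Sum> y\<^sub>k \<ge> y\<^sub>K \<ge> 0\<close>, so \<open>N w \<ge> N y\<^sub>K = 2\<^sup>K\<close> for all \<open>K\<close>.\<close>

lemma not_closed_range_if_approx_eigenvectors:
  assumes l: "l > 0"
    and approx: "\<And>c. c > 0 \<Longrightarrow> \<exists>x\<in>E. (\<forall>k. 0 \<le> x k) \<and> N (Tlam l x) < c * N x"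
  shows "\<not> N_closed E N (Tlam l ` E)"
proof
  assume closed: "N_closed E N (Tlam l ` E)"
  obtain y where y_mem: "\<And>k. y k \<in> E" and y_nonneg: "\<And>k j. 0 \<le> y k j"
    and N_y: "\<And>k. N (y k) = 2 ^ k" and N_Ty: "\<And>k. N (Tlam l (y k)) \<le> (1/2) ^ k"
    using scaled_approx_eigenvectors[OF approx] by blast
  have "summable (\<lambda>k. N (Tlam l (y k)))"
    by (rule summable_comparison_test'[where g = "\<lambda>k. (1/2) ^ k" and N = 0])
      (use N_Ty N_nonneg Tlam_mem y_mem in auto)
  then obtain z where z: "z \<in> E" "(\<lambda>K. N ((\<Sum>k<K. Tlam l (y k)) - z)) \<longlonglongrightarrow> 0"
    "\<And>j. (\<lambda>k. Tlam l (y k) j) sums z j"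
    using summable_N_imp_convergent[of "\<lambda>k. Tlam l (y k)"] Tlam_mem y_mem by blast
  define Y where "Y K = (\<Sum>k<K. y k)" for K
  have Y_mem: "Y K \<in> E" for K
    unfolding Y_def using y_mem by (intro sum_mem)
  have TY: "(\<Sum>k<K. Tlam l (y k)) = Tlam l (Y K)" for K
    unfolding Y_def by (simp add: Tlam_sum)
  have "z \<in> Tlam l ` E"
    using closed z(1,2) Y_mem unfolding N_closed_def TY by (metis image_eqI)
  then obtain w where w: "w \<in> E" "z = Tlam l w"
    by blast
  have "(\<lambda>K. Tlam l (Y K) k) \<longlonglongrightarrow> z k" for k
    using z(3)[of k] by (simp add: sums_def flip: TY add: sum_apply)
  then have "(\<lambda>K. Tlam_inv l (Tlam l (Y K)) k) \<longlonglongrightarrow> Tlam_inv l z k" for k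
    by (rule Tlam_inv_tendsto)
  then have Y_lim: "(\<lambda>K. Y K k) \<longlonglongrightarrow> w k" for k
    using l w(2) by (simp add: Tlam_inv_Tlam)
  have "\<bar>y K k\<bar> \<le> \<bar>w k\<bar>" for K k
  proof -
    have "incseq (\<lambda>K. Y K k)"
      by (rule incseq_SucI) (simp add: Y_def sum_apply y_nonneg)
    then have "Y (Suc K) k \<le> w k"
      using incseq_le Y_lim by blast
    moreover have "y K k \<le> Y (Suc K) k"
      unfolding Y_def sum_apply using y_nonneg by (simp add: sum_nonneg)
    ultimately show ?thesis
      using y_nonneg[of K k] by simp
  qed
  then have "2 ^ K \<le> N w" for K
    using dominated[OF w(1)] N_y by metis
  moreover obtain K where "N w < 2 ^ K"
    using real_arch_pow[of 2 "N w"] by auto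
  ultimately show False
    by (meson not_le)
qed

section \<open>Approximate eigenvectors\<close>

lemma geom_block_mem: "geom_block l a b \<in> E"
  unfolding geom_block_eq_sum by (intro sum_mem scaled_unitv_mem)

lemma N_Tlam_geom_block_le:
  assumes "l > 0" and "a < b"
  shows "N (Tlam l (geom_block l a b)) \<le> l * (s a / l ^ a + s b / l ^ b)"
proof -
  have "N (Tlam l (geom_block l a b)) \<le> N (\<lambda>j. (- l / l ^ a) * unitv a j) + N (\<lambda>j. (l / l ^ b) * unitv b j)"
    unfolding Tlam_geom_block[OF assms(2) less_imp_neq[OF assms(1), symmetric]]
    by (intro N_triangle scaled_unitv_mem)
  also have "\<dots> = l * (s a / l ^ a + s b / l ^ b)"
    unfolding N_scaled_unitv using assms(1) by (simp add: abs_divide algebra_simps)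
  finally show ?thesis .
qed

lemma trapezoid_vector:
  assumes l: "l > 0" and n: "n > 0" and ap: "a + n \<le> p" and pb: "p + Suc n \<le> b"
  defines "x \<equiv> \<lambda>k. trapezoid a b n (real k) / l ^ k"
  shows "x \<in> E" and "\<And>k. 0 \<le> x k" and "s p / l ^ p \<le> N x"
    and "N (Tlam l x) \<le> (l / n) * N (geom_block l a b)"
proof -
  have "a < b"
    using ap pb by simp
  show x_nonneg: "0 \<le> x k" for k
    unfolding x_def using trapezoid_bounds l by simp
  have "\<bar>x k\<bar> \<le> \<bar>geom_block l a b k\<bar>" for k
  proof (cases "a \<le> k \<and> k < b")
    case True
    then show ?thesis
      unfolding x_def geom_block_def using trapezoid_bounds[of a b n k] l
      by (simp add: divide_right_mono)
  next
    case False
    then have "real k + 1 \<le> real a \<or> real b \<le> real k + 1"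
      by auto
    then show ?thesis
      unfolding x_def using trapezoid_eq_0[OF n] by simp
  qed
  then show x_mem: "x \<in> E"
    using dominated[OF geom_block_mem] by blast
  show "s p / l ^ p \<le> N x"
    using abs_coord_le[OF x_mem, of p] trapezoid_eq_1[OF n ap pb] l
    unfolding x_def by (simp add: field_simps)
  have "\<bar>Tlam l x k\<bar> \<le> \<bar>(l / n) * geom_block l a b k\<bar>" for k
    using abs_Tlam_trapezoid_le[OF l n \<open>a < b\<close>, of k] l
    unfolding x_def by (simp add: abs_mult geom_block_def)
  then have "N (Tlam l x) \<le> N (\<lambda>k. (l / n) * geom_block l a b k)"
    using dominated[OF scale_mem[OF geom_block_mem]] by blast
  also have "\<dots> = (l / n) * N (geom_block l a b)"
    using N_scale[OF geom_block_mem, of "l / n"] l by simp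
  finally show "N (Tlam l x) \<le> (l / n) * N (geom_block l a b)" .
qed

text \<open>Either the block \<open>H = geom_block l a b\<close> over a hump \<open>a < p < b\<close> of \<open>s\<^sub>j / \<lambda>\<^sup>j\<close> is already
  an approximate eigenvector, or \<open>c N H \<le> N (T\<^sub>\<lambda> H) \<le> 4 \<lambda> s\<^sub>p / \<lambda>\<^sup>p\<close>, and then the trapezoidal
  smoothing of \<open>H\<close> is one: its defect is \<open>(\<lambda>/n) N H\<close> while its norm is at least \<open>s\<^sub>p / \<lambda>\<^sup>p\<close>.\<close>

lemma approx_eigenvector_over_hump:
  assumes l: "l > 0" and c: "c > 0" and n: "4 * l ^ 2 / c ^ 2 < real n"
    and hump: "a + Suc n \<le> p" "p + Suc n \<le> b"
      "s a / l ^ a \<le> 2 * (s p / l ^ p)" "s b / l ^ b \<le> 2 * (s p / l ^ p)"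
  shows "\<exists>x\<in>E. (\<forall>k. 0 \<le> x k) \<and> N (Tlam l x) < c * N x"
proof -
  define t where "t k = s k / l ^ k" for k
  have "0 < 4 * l ^ 2 / c ^ 2"
    using l c by simp
  with n have "n > 0"
    by simp
  define H where "H = geom_block l a b"
  show ?thesis
  proof (cases "N (Tlam l H) < c * N H")
    case True
    moreover have "0 \<le> H k" for k
      unfolding H_def geom_block_def using l by simp
    ultimately show ?thesis
      using geom_block_mem unfolding H_def by blast
  next
    case False
    define x where "x = (\<lambda>k. trapezoid a b n (real k) / l ^ k)"
    have "a + n \<le> p"
      using hump(1) by simp
    note x = trapezoid_vector[OF l \<open>n > 0\<close> this hump(2), folded x_def t_def]
    have "c * N H \<le> l * (t a + t b)"
      using False N_Tlam_geom_block_le[OF l, of a b] hump unfolding H_def t_def by simp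
    also have "\<dots> \<le> 4 * l * N x"
      using hump(3,4) x(3) l unfolding t_def by simp
    finally have cH: "c * N H \<le> 4 * l * N x" .
    have "c * N (Tlam l x) \<le> (l / n) * (c * N H)"
      using mult_left_mono[OF x(4), of c] c unfolding H_def by (simp add: ac_simps)
    also have "\<dots> \<le> (4 * l ^ 2 / n) * N x"
      using mult_left_mono[OF cH, of "l / n"] l by (simp add: power2_eq_square ac_simps)
    also have "\<dots> < c ^ 2 * N x"
    proof (rule mult_strict_right_mono)
      have "4 * l ^ 2 < real n * c ^ 2"
        using n c by (simp add: field_simps)
      then show "4 * l ^ 2 / n < c ^ 2"
        using \<open>n > 0\<close> by (simp add: field_simps)
      have "0 < t p"
        unfolding t_def using s_pos[of p] l by simp
      with x(3) show "0 < N x"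
        by linarith
    qed
    finally have "N (Tlam l x) < c * N x"
      using c by (simp add: power2_eq_square)
    moreover have "\<forall>k. 0 \<le> x k"
      using x(2) unfolding x_def by simp
    ultimately show ?thesis
      using x(1) by blast
  qed
qed

lemma nonneg_approx_eigenvector:
  assumes l: "l > 0" and c: "c > 0"
    and no_doubling: "\<And>m. \<exists>j. s j / l ^ j < 2 * (s (j + m) / l ^ (j + m))"
    and no_halving: "\<And>m. \<exists>j. s (j + m) / l ^ (j + m) < 2 * (s j / l ^ j)"
  shows "\<exists>x\<in>E. (\<forall>k. 0 \<le> x k) \<and> N (Tlam l x) < c * N x"
proof -
  obtain n :: nat where n: "4 * l ^ 2 / c ^ 2 < real n"
    using reals_Archimedean2 by blast
  have "s k / l ^ k > 0" for k
    using s_pos l by simp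
  then obtain a p b where "a + Suc n \<le> p" "p + Suc n \<le> b"
    "s a / l ^ a \<le> 2 * (s p / l ^ p)" "s b / l ^ b \<le> 2 * (s p / l ^ p)"
    using exists_hump[of "\<lambda>k. s k / l ^ k" "Suc n"] no_doubling no_halving by blast
  then show ?thesis
    by (rule approx_eigenvector_over_hump[OF l c n])
qed

section \<open>Inverting \<open>T\<^sub>\<lambda>\<close> outside the annulus\<close>

lemma N_scaled_abs_tau: "x \<in> E \<Longrightarrow> N (\<lambda>j. c * \<bar>tau n x j\<bar>) = \<bar>c\<bar> * N (tau n x)"
  using N_scale[OF abs_mem[OF tau_mem], of x c n] N_abs[OF tau_mem] by simp

text \<open>\<open>T\<^sub>\<lambda>\<^sup>-\<^sup>1 = -\<Sum> \<lambda>\<^sup>-\<^sup>n\<^sup>-\<^sup>1 \<tau>\<^sub>n\<close> (Neumann series); the lattice property lets us bound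
  \<open>T\<^sub>\<lambda>\<^sup>-\<^sup>1 a\<close> coordinatewise by the sum of the absolute values of the terms.\<close>

lemma Tlam_inv_dominated:
  assumes l: "l > 0" and \<rho>: "0 < \<rho>" "\<rho> < l" and a: "a \<in> E"
    and K: "\<And>n. N (tau (int n) a) \<le> K * \<rho> ^ n * N a"
  shows "Tlam_inv l a \<in> E \<and> N (Tlam_inv l a) \<le> K / l / (1 - \<rho> / l) * N a"
proof -
  define f where "f n = (\<lambda>j. (1 / l ^ Suc n) * \<bar>tau (int n) a j\<bar>)" for n
  have f_mem: "f n \<in> E" for n
    unfolding f_def by (intro scale_mem abs_mem tau_mem a)
  have N_f: "N (f n) \<le> (K / l * N a) * (\<rho> / l) ^ n" for n
    unfolding f_def N_scaled_abs_tau[OF a] using mult_left_mono[OF K[of n], of "1 / l ^ Suc n"] l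
    by (simp add: power_divide ac_simps)
  obtain z where z: "z \<in> E" "N z \<le> K / l * N a / (1 - \<rho> / l)" "\<And>j. (\<lambda>n. f n j) sums z j"
    using geometric_series_limit[where f = f, OF f_mem N_f] \<rho> l by auto
  have "\<bar>Tlam_inv l a m\<bar> \<le> \<bar>z m\<bar>" for m
  proof -
    have "(\<Sum>n\<le>m. \<bar>a (m - n)\<bar> / l ^ Suc n) = (\<Sum>n<Suc m. f n m)"
      unfolding lessThan_Suc_atMost by (intro sum.cong) (auto simp: f_def tau_nat_apply)
    also have "\<dots> \<le> (\<Sum>n. f n m)"
      using l by (intro sum_le_suminf[OF sums_summable[OF z(3)]]) (auto simp: f_def)
    also have "\<dots> = z m"
      using z(3) by (rule sums_unique[symmetric])
    finally show ?thesis
      using abs_Tlam_inv_le[OF l, of a m] by simp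
  qed
  then have "Tlam_inv l a \<in> E \<and> N (Tlam_inv l a) \<le> N z"
    using dominated[OF z(1)] by blast
  with z(2) show ?thesis
    by simp
qed

lemma Tlam_inv_bounded_above_k_plus:
  assumes lk: "k_plus E N < l"
  shows "\<exists>C>0. \<forall>a\<in>E. Tlam_inv l a \<in> E \<and> N (Tlam_inv l a) \<le> C * N a"
proof -
  define \<rho> where "\<rho> = (k_plus E N + l) / 2"
  have l: "l > 0" and \<rho>: "\<rho> > 0" "k_plus E N < \<rho>" "\<rho> < l"
    using lk k_plus_nonneg unfolding \<rho>_def by auto
  obtain K where K: "K > 0" "\<And>n x. x \<in> E \<Longrightarrow> N (tau (int n) x) \<le> K * \<rho> ^ n * N x"
    using N_tau_geometric_bound_above_k_plus[OF \<rho>(2)] by blast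
  have "K / l / (1 - \<rho> / l) > 0"
    using K l \<rho> by simp
  then show ?thesis
    using Tlam_inv_dominated[OF l \<rho>(1,3) _ K(2)] by blast
qed

lemma Tlam_rinv_dominated:
  assumes l: "l > 0" and \<rho>: "0 < \<rho>" "l * \<rho> < 1" and a: "a \<in> E"
    and K: "\<And>n. N (tau (- int n) a) \<le> K * \<rho> ^ n * N a"
  shows "(\<forall>m. summable (\<lambda>n. \<bar>l ^ n * a (m + 1 + n)\<bar>)) \<and> Tlam_rinv l a \<in> E
    \<and> N (Tlam_rinv l a) \<le> K * \<rho> / (1 - l * \<rho>) * N a"
proof -
  define f where "f n = (\<lambda>j. l ^ n * \<bar>tau (- int (Suc n)) a j\<bar>)" for n
  have f_mem: "f n \<in> E" for n
    unfolding f_def by (intro scale_mem abs_mem tau_mem a)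
  have N_f: "N (f n) \<le> (K * \<rho> * N a) * (l * \<rho>) ^ n" for n
    unfolding f_def N_scaled_abs_tau[OF a] using mult_left_mono[OF K[of "Suc n"], of "l ^ n"] l
    by (simp add: power_mult_distrib ac_simps)
  obtain z where z: "z \<in> E" "N z \<le> K * \<rho> * N a / (1 - l * \<rho>)" "\<And>j. (\<lambda>n. f n j) sums z j"
    using geometric_series_limit[where f = f, OF f_mem N_f] \<rho> l by auto
  have sums: "(\<lambda>n. \<bar>l ^ n * a (m + 1 + n)\<bar>) sums z m" for m
    using z(3)[of m] l unfolding f_def tau_neg_apply by (simp add: abs_mult)
  have "\<bar>Tlam_rinv l a m\<bar> \<le> \<bar>z m\<bar>" for m
  proof -
    have "\<bar>Tlam_rinv l a m\<bar> \<le> (\<Sum>n. \<bar>l ^ n * a (m + 1 + n)\<bar>)"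
      unfolding Tlam_rinv_def by (rule summable_rabs[OF sums_summable[OF sums]])
    also have "\<dots> = z m"
      using sums by (rule sums_unique[symmetric])
    finally show ?thesis
      by simp
  qed
  then have "Tlam_rinv l a \<in> E \<and> N (Tlam_rinv l a) \<le> N z"
    using dominated[OF z(1)] by blast
  with z(2) sums_summable[OF sums] show ?thesis
    by simp
qed

lemma Tlam_rinv_bounded:
  assumes l: "l > 0" and lk: "l * k_minus E N < 1"
  shows "\<exists>C>0. \<forall>a\<in>E. (\<forall>m. summable (\<lambda>n. \<bar>l ^ n * a (m + 1 + n)\<bar>))
                    \<and> Tlam_rinv l a \<in> E \<and> N (Tlam_rinv l a) \<le> C * N a"
proof -
  define \<rho> where "\<rho> = (k_minus E N + 1 / l) / 2"
  have "k_minus E N < 1 / l"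
    using lk l by (simp add: field_simps)
  then have "\<rho> > 0" "k_minus E N < \<rho>" "\<rho> < 1 / l"
    using l k_minus_nonneg unfolding \<rho>_def by (simp_all add: add_nonneg_pos)
  then have \<rho>: "\<rho> > 0" "k_minus E N < \<rho>" "l * \<rho> < 1"
    using l by (simp_all add: field_simps)
  obtain K where K: "K > 0" "\<And>n x. x \<in> E \<Longrightarrow> N (tau (- int n) x) \<le> K * \<rho> ^ n * N x"
    using N_tau_geometric_bound_above_k_minus[OF \<rho>(2)] by blast
  have "K * \<rho> / (1 - l * \<rho>) > 0"
    using K \<rho> by simp
  then show ?thesis
    using Tlam_rinv_dominated[OF l \<rho>(1,3) _ K(2)] by blast
qed

lemma bounded_below_above_k_plus:
  assumes "k_plus E N < l"
  shows "\<exists>c>0. \<forall>x\<in>E. c * N x \<le> N (Tlam l x)"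
proof -
  obtain C where C: "C > 0" "\<And>a. a \<in> E \<Longrightarrow> Tlam_inv l a \<in> E \<and> N (Tlam_inv l a) \<le> C * N a"
    using Tlam_inv_bounded_above_k_plus[OF assms] by blast
  have "l \<noteq> 0"
    using assms k_plus_nonneg by auto
  have "1 / C * N x \<le> N (Tlam l x)" if "x \<in> E" for x
    using C(2)[OF Tlam_mem[OF that, of l]] C(1) by (simp add: Tlam_inv_Tlam[OF \<open>l \<noteq> 0\<close>] field_simps)
  with C(1) show ?thesis
    by (intro exI[of _ "1 / C"]) auto
qed

lemma range_Tlam_above_k_plus:
  assumes "k_plus E N < l"
  shows "Tlam l ` E = E"
proof
  show "Tlam l ` E \<subseteq> E"
    using Tlam_mem by blast
  obtain C where C: "\<And>a. a \<in> E \<Longrightarrow> Tlam_inv l a \<in> E \<and> N (Tlam_inv l a) \<le> C * N a"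
    using Tlam_inv_bounded_above_k_plus[OF assms] by blast
  have "l \<noteq> 0"
    using assms k_plus_nonneg by auto
  show "E \<subseteq> Tlam l ` E"
  proof
    fix a assume "a \<in> E"
    then show "a \<in> Tlam l ` E"
      using C Tlam_Tlam_inv[OF \<open>l \<noteq> 0\<close>, of a] by (metis image_eqI)
  qed
qed

lemma mult_k_minus_less_1: "0 < l \<Longrightarrow> l < 1 / k_minus E N \<Longrightarrow> l * k_minus E N < 1"
  using k_minus_nonneg by (cases "k_minus E N = 0") (auto simp: field_simps)

context
  fixes l :: real
  assumes l: "0 < l" and l_below: "l < 1 / k_minus E N"
begin

lemma Tlam_rinv_props:
  obtains C where "C > 0"
    and "\<And>a m. a \<in> E \<Longrightarrow> summable (\<lambda>n. \<bar>l ^ n * a (m + 1 + n)\<bar>)"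
    and "\<And>a. a \<in> E \<Longrightarrow> Tlam_rinv l a \<in> E"
    and "\<And>a. a \<in> E \<Longrightarrow> N (Tlam_rinv l a) \<le> C * N a"
  using Tlam_rinv_bounded[OF l mult_k_minus_less_1[OF l l_below]] by metis

lemma summable_range_functional_mem:
  assumes "a \<in> E"
  shows "summable (\<lambda>k. l ^ Suc k * a k)"
proof -
  obtain C where "\<And>m. summable (\<lambda>n. \<bar>l ^ n * a (m + 1 + n)\<bar>)"
    using Tlam_rinv_props assms by metis
  then show ?thesis
    by (rule summable_range_functional[OF l])
qed

lemma Tlam_Tlam_rinv_mem:
  assumes "a \<in> E"
  shows "Tlam l (Tlam_rinv l a) = (\<lambda>k. a k - (if k = 0 then range_functional l a / l else 0))"
proof -
  obtain C where "\<And>m. summable (\<lambda>n. \<bar>l ^ n * a (m + 1 + n)\<bar>)"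
    using Tlam_rinv_props assms by metis
  then show ?thesis
    by (rule Tlam_Tlam_rinv[OF l])
qed

lemma Tlam_rinv_Tlam:
  assumes "x \<in> E"
  shows "Tlam_rinv l (Tlam l x) = x"
proof -
  have "range_functional l (Tlam l x) = 0"
    by (rule range_functional_Tlam[OF summable_range_functional_mem[OF assms]])
  then have "Tlam l (Tlam_rinv l (Tlam l x)) = Tlam l x"
    using Tlam_Tlam_rinv_mem[OF Tlam_mem[OF assms, of l]] by (auto simp: fun_eq_iff)
  then have "Tlam_inv l (Tlam l (Tlam_rinv l (Tlam l x))) = Tlam_inv l (Tlam l x)"
    by simp
  then show ?thesis
    using l by (simp add: Tlam_inv_Tlam)
qed

lemma bounded_below_below_inv_k_minus: "\<exists>c>0. \<forall>x\<in>E. c * N x \<le> N (Tlam l x)"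
proof -
  obtain C where C: "C > 0" "\<And>a. a \<in> E \<Longrightarrow> N (Tlam_rinv l a) \<le> C * N a"
    using Tlam_rinv_props by metis
  have "1 / C * N x \<le> N (Tlam l x)" if "x \<in> E" for x
    using C(2)[OF Tlam_mem[OF that, of l]] C(1) by (simp add: Tlam_rinv_Tlam[OF that] field_simps)
  with C(1) show ?thesis
    by (intro exI[of _ "1 / C"]) auto
qed

lemma range_Tlam_below_inv_k_minus: "Tlam l ` E = {a \<in> E. range_functional l a = 0}"
proof (intro equalityI subsetI)
  fix y assume "y \<in> Tlam l ` E"
  then obtain x where "x \<in> E" "y = Tlam l x"
    by blast
  then show "y \<in> {a \<in> E. range_functional l a = 0}"
    using Tlam_mem range_functional_Tlam[OF summable_range_functional_mem] by simp
next
  fix a assume "a \<in> {a \<in> E. range_functional l a = 0}"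
  then have a: "a \<in> E" "range_functional l a = 0"
    by auto
  have "a = Tlam l (Tlam_rinv l a)"
    using Tlam_Tlam_rinv_mem[OF a(1)] a(2) by (auto simp: fun_eq_iff)
  moreover have "Tlam_rinv l a \<in> E"
    using Tlam_rinv_props a(1) by metis
  ultimately show "a \<in> Tlam l ` E"
    by blast
qed

lemma range_Tlam_codim_1:
  "unitv 0 \<notin> Tlam l ` E \<and> (\<forall>x\<in>E. \<exists>c y. y \<in> Tlam l ` E \<and> x = (\<lambda>k. c * unitv 0 k + y k))"
proof -
  have unitv_sums: "(\<lambda>k. l ^ Suc k * unitv 0 k) sums l"
  proof -
    have "(\<lambda>k. l ^ Suc k * unitv 0 k) = (\<lambda>k. if k = 0 then l ^ Suc k else 0)"
      by (auto simp: unitv_def)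
    then show ?thesis
      using sums_single[of 0 "\<lambda>k. l ^ Suc k"] by simp
  qed
  have "unitv 0 \<notin> Tlam l ` E"
    using unitv_sums l unfolding range_Tlam_below_inv_k_minus range_functional_def by (simp add: sums_iff)
  moreover have "\<exists>c y. y \<in> Tlam l ` E \<and> x = (\<lambda>k. c * unitv 0 k + y k)" if x: "x \<in> E" for x
  proof -
    define c where "c = range_functional l x / l"
    define y where "y = x - (\<lambda>k. c * unitv 0 k)"
    have "(\<lambda>k. l ^ Suc k * x k - c * (l ^ Suc k * unitv 0 k)) sums (range_functional l x - c * l)"
      unfolding range_functional_def using summable_range_functional_mem[OF x] unitv_sums
      by (intro sums_diff sums_mult) (simp_all add: summable_sums)
    then have "range_functional l y = 0"
      using l unfolding range_functional_def y_def c_def by (simp add: sums_iff algebra_simps)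
    then have "y \<in> Tlam l ` E"
      unfolding range_Tlam_below_inv_k_minus y_def using diff_mem[OF x scaled_unitv_mem] by simp
    moreover have "x = (\<lambda>k. c * unitv 0 k + y k)"
      unfolding y_def by simp
    ultimately show ?thesis
      by blast
  qed
  ultimately show ?thesis
    by blast
qed

end

definition unit_shift_ratio :: "nat \<Rightarrow> real" where
  "unit_shift_ratio n = (SUP k\<in>{n..}. s k / s (k - n))"

definition unit_backshift_ratio :: "nat \<Rightarrow> real" where
  "unit_backshift_ratio n = (SUP k. s k / s (n + k))"

lemma unit_shift_ratio_bdd: "bdd_above ((\<lambda>k. s k / s (k - n)) ` {n..})"
proof (rule bdd_aboveI2)
  fix k assume "k \<in> {n..}"
  then show "s k / s (k - n) \<le> opnorm E N (tau (int n))"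
    using s_shift_le[of "k - n" "int n"] s_pos[of "k - n"] by (simp add: divide_le_eq)
qed

lemma unit_backshift_ratio_bdd: "bdd_above (range (\<lambda>k. s k / s (n + k)))"
proof (rule bdd_aboveI2)
  fix k
  show "s k / s (n + k) \<le> opnorm E N (tau (- int n))"
    using s_shift_le[of "n + k" "- int n"] s_pos[of "n + k"] by (simp add: divide_le_eq)
qed

lemma unit_shift_ratio_upper: "n \<le> k \<Longrightarrow> s k / s (k - n) \<le> unit_shift_ratio n"
  unfolding unit_shift_ratio_def by (rule cSUP_upper[OF _ unit_shift_ratio_bdd]) simp

lemma unit_backshift_ratio_upper: "s k / s (n + k) \<le> unit_backshift_ratio n"
  unfolding unit_backshift_ratio_def by (rule cSUP_upper[OF _ unit_backshift_ratio_bdd]) simp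

lemma unit_shift_ratio_pos: "unit_shift_ratio n > 0"
proof -
  have "0 < s n / s (n - n)"
    using s_pos by simp
  then show ?thesis
    using unit_shift_ratio_upper[of n n] by linarith
qed

lemma unit_backshift_ratio_pos: "unit_backshift_ratio n > 0"
proof -
  have "0 < s 0 / s (n + 0)"
    using s_pos by simp
  then show ?thesis
    using unit_backshift_ratio_upper[of 0 n] by linarith
qed

lemma unit_shift_ratio_submult: "unit_shift_ratio (n + m) \<le> unit_shift_ratio n * unit_shift_ratio m"
  unfolding unit_shift_ratio_def[of "n + m"]
proof (rule cSUP_least)
  fix k assume "k \<in> {n + m..}"
  then have "s k / s (k - (n + m)) = (s k / s (k - n)) * (s (k - n) / s (k - n - m))"
    using s_pos[of "k - n"] by (simp add: diff_diff_add)
  also have "\<dots> \<le> unit_shift_ratio n * unit_shift_ratio m"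
    using \<open>k \<in> {n + m..}\<close> s_pos unit_shift_ratio_pos
    by (intro mult_mono unit_shift_ratio_upper) (auto intro: less_imp_le)
  finally show "s k / s (k - (n + m)) \<le> unit_shift_ratio n * unit_shift_ratio m" .
qed simp

lemma unit_backshift_ratio_submult:
  "unit_backshift_ratio (n + m) \<le> unit_backshift_ratio n * unit_backshift_ratio m"
  unfolding unit_backshift_ratio_def[of "n + m"]
proof (rule cSUP_least)
  fix k
  have "s k / s (n + m + k) = (s (m + k) / s (n + (m + k))) * (s k / s (m + k))"
    using s_pos[of "m + k"] by (simp add: ac_simps)
  also have "\<dots> \<le> unit_backshift_ratio n * unit_backshift_ratio m"
    using s_pos unit_backshift_ratio_pos
    by (intro mult_mono unit_backshift_ratio_upper) (auto intro: less_imp_le)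
  finally show "s k / s (n + m + k) \<le> unit_backshift_ratio n * unit_backshift_ratio m" .
qed simp

end

locale unit_exponents = shift_lattice +
  assumes k_plus_units: "(\<lambda>n. (SUP k\<in>{n..}. N (unitv k) / N (unitv (k - n))) powr (1 / real n))
      \<longlonglongrightarrow> k_plus E N"
    and k_minus_units: "(\<lambda>n. (SUP k. N (unitv k) / N (unitv (n + k))) powr (1 / real n))
      \<longlonglongrightarrow> k_minus E N"
begin

lemma power_k_plus_le: "n \<ge> 1 \<Longrightarrow> k_plus E N ^ n \<le> unit_shift_ratio n"
  using k_plus_units unfolding s_def[symmetric] unit_shift_ratio_def[symmetric]
  by (rule submultiplicative_root_limit_le[OF unit_shift_ratio_pos unit_shift_ratio_submult])

lemma power_k_minus_le: "n \<ge> 1 \<Longrightarrow> k_minus E N ^ n \<le> unit_backshift_ratio n"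
  using k_minus_units unfolding s_def[symmetric] unit_backshift_ratio_def[symmetric]
  by (rule submultiplicative_root_limit_le[OF unit_backshift_ratio_pos unit_backshift_ratio_submult])

lemma k_plus_mult_k_minus_ge_1: "k_plus E N * k_minus E N \<ge> 1"
proof -
  have "1 \<le> unit_shift_ratio n powr (1 / real n) * unit_backshift_ratio n powr (1 / real n)" for n
  proof -
    have "1 = (s n / s 0) * (s 0 / s n)"
      using s_pos[of n] s_pos[of 0] by simp
    also have "\<dots> \<le> unit_shift_ratio n * unit_backshift_ratio n"
      using unit_shift_ratio_upper[of n n] unit_backshift_ratio_upper[of 0 n] s_pos unit_shift_ratio_pos[of n]
      by (intro mult_mono) (auto intro: less_imp_le)
    finally show ?thesis
      using unit_shift_ratio_pos[of n] unit_backshift_ratio_pos[of n]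
      by (simp add: ge_one_powr_ge_zero flip: powr_mult)
  qed
  moreover have "(\<lambda>n. unit_shift_ratio n powr (1 / real n) * unit_backshift_ratio n powr (1 / real n))
      \<longlonglongrightarrow> k_plus E N * k_minus E N"
    using k_plus_units k_minus_units unfolding s_def[symmetric] unit_shift_ratio_def[symmetric]
      unit_backshift_ratio_def[symmetric] by (rule tendsto_mult)
  ultimately show ?thesis
    by (intro LIMSEQ_le_const) auto
qed

lemma k_minus_pos: "k_minus E N > 0"
  using k_plus_mult_k_minus_ge_1 k_minus_nonneg by (cases "k_minus E N = 0") auto

lemma no_doubling_if_le_k_plus:
  assumes l: "0 < l" "l \<le> k_plus E N"
  shows "\<exists>j. s j / l ^ j < 2 * (s (j + m) / l ^ (j + m))"
proof (cases "m = 0")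
  case True
  then show ?thesis
    using s_pos[of 0] by (intro exI[of _ 0]) simp
next
  case False
  have "l ^ m / 2 < l ^ m"
    using l by simp
  also have "l ^ m \<le> k_plus E N ^ m"
    using l by (intro power_mono) auto
  also have "\<dots> \<le> unit_shift_ratio m"
    using False by (intro power_k_plus_le) simp
  finally have "\<exists>k\<in>{m..}. l ^ m / 2 < s k / s (k - m)"
    unfolding unit_shift_ratio_def
    by (rule less_cSUP_iff[OF _ unit_shift_ratio_bdd, THEN iffD1, rotated]) simp
  then obtain k where k: "m \<le> k" "l ^ m / 2 < s k / s (k - m)"
    by auto
  define j where "j = k - m"
  have "l ^ m * s j < 2 * s (j + m)"
    using k s_pos[of j] unfolding j_def by (simp add: field_simps)
  then have "s j / l ^ j < 2 * (s (j + m) / l ^ (j + m))"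
    using l by (simp add: power_add field_simps)
  then show ?thesis
    by blast
qed

lemma no_halving_if_ge_inv_k_minus:
  assumes l: "0 < l" "1 / k_minus E N \<le> l"
  shows "\<exists>j. s (j + m) / l ^ (j + m) < 2 * (s j / l ^ j)"
proof (cases "m = 0")
  case True
  then show ?thesis
    using s_pos[of 0] by (intro exI[of _ 0]) simp
next
  case False
  have "1 / l \<le> k_minus E N"
    using l k_minus_pos by (simp add: field_simps)
  have "(1 / l) ^ m / 2 < (1 / l) ^ m"
    using l by simp
  also have "(1 / l) ^ m \<le> k_minus E N ^ m"
    using \<open>1 / l \<le> k_minus E N\<close> l by (intro power_mono) auto
  also have "\<dots> \<le> unit_backshift_ratio m"
    using False by (intro power_k_minus_le) simp
  finally have "\<exists>k\<in>UNIV. (1 / l) ^ m / 2 < s k / s (m + k)"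
    unfolding unit_backshift_ratio_def
    by (rule less_cSUP_iff[OF _ unit_backshift_ratio_bdd, THEN iffD1, rotated]) simp
  then obtain k where "(1 / l) ^ m / 2 < s k / s (m + k)"
    by auto
  then have "s (k + m) < 2 * l ^ m * s k"
    using s_pos[of "m + k"] l by (simp add: field_simps power_one_over add.commute)
  then have "s (k + m) / l ^ (k + m) < 2 * (s k / l ^ k)"
    using l by (simp add: power_add field_simps)
  then show ?thesis
    by blast
qed

lemma closed_range_imp_outside_annulus:
  assumes l: "l > 0" and closed: "N_closed E N (Tlam l ` E)"
  shows "l < 1 / k_minus E N \<or> k_plus E N < l"
proof (rule ccontr)
  assume "\<not> ?thesis"
  then have "\<exists>x\<in>E. (\<forall>k. 0 \<le> x k) \<and> N (Tlam l x) < c * N x" if "c > 0" for c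
    using nonneg_approx_eigenvector[OF l that] no_doubling_if_le_k_plus no_halving_if_ge_inv_k_minus l
    by (simp add: not_less)
  then show False
    using not_closed_range_if_approx_eigenvectors[OF l] closed by blast
qed

end

theorem proposition5p1:
  fixes E :: "seq set" and N :: "seq \<Rightarrow> real" and l :: real
  assumes lat: "banach_seq_lattice E N"
    and sep: "norm_separable E N"
    and units: "\<forall>k. unitv k \<in> E"
    and shifts: "\<forall>n::int. bounded_on E N (tau n)"
    and kp: "(\<lambda>n. (SUP k\<in>{n..}. N (unitv k) / N (unitv (k - n))) powr (1 / real n))
               \<longlonglongrightarrow> k_plus E N"
    and km: "(\<lambda>n. (SUP k\<in>(UNIV::nat set). N (unitv k) / N (unitv (n + k))) powr (1 / real n))
               \<longlonglongrightarrow> k_minus E N"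
    and lpos: "l > 0"
  shows "((\<exists>c>0. \<forall>x\<in>E. N (Tlam l x) \<ge> c * N x) \<longleftrightarrow> N_closed E N (Tlam l ` E))
       \<and> (N_closed E N (Tlam l ` E) \<longleftrightarrow>
            l \<in> {0<..<1 / k_minus E N} \<union> {k_plus E N<..})
       \<and> (l > k_plus E N \<longrightarrow> Tlam l ` E = E)
       \<and> (l < 1 / k_minus E N \<longrightarrow>
            (\<forall>a\<in>E. summable (\<lambda>k. l ^ (Suc k) * a k))
          \<and> Tlam l ` E = {a \<in> E. (\<Sum>k. l ^ (Suc k) * a k) = 0}
          \<and> N_closed E N (Tlam l ` E)
          \<and> (\<exists>v\<in>E. v \<notin> Tlam l ` E \<and>
               (\<forall>x\<in>E. \<exists>c y. y \<in> Tlam l ` E \<and> x = (\<lambda>k. c * v k + y k))))"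
proof -
  interpret unit_exponents E N
    using lat units shifts kp km by unfold_locales auto
  have below_imp_closed: "(\<exists>c>0. \<forall>x\<in>E. N (Tlam l x) \<ge> c * N x) \<Longrightarrow> N_closed E N (Tlam l ` E)"
    using closed_range_if_bounded_below by blast
  have closed_imp_annulus: "N_closed E N (Tlam l ` E) \<Longrightarrow> l < 1 / k_minus E N \<or> k_plus E N < l"
    by (rule closed_range_imp_outside_annulus[OF lpos])
  have annulus_imp_below: "l < 1 / k_minus E N \<or> k_plus E N < l \<Longrightarrow> \<exists>c>0. \<forall>x\<in>E. N (Tlam l x) \<ge> c * N x"
    using bounded_below_above_k_plus bounded_below_below_inv_k_minus[OF lpos] by blast
  have annulus: "l \<in> {0<..<1 / k_minus E N} \<union> {k_plus E N<..} \<longleftrightarrow> l < 1 / k_minus E N \<or> k_plus E N < l"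
    using lpos by auto
  show ?thesis
  proof (intro conjI impI)
    show "(\<exists>c>0. \<forall>x\<in>E. N (Tlam l x) \<ge> c * N x) \<longleftrightarrow> N_closed E N (Tlam l ` E)"
      using below_imp_closed closed_imp_annulus annulus_imp_below by blast
    show "N_closed E N (Tlam l ` E) \<longleftrightarrow> l \<in> {0<..<1 / k_minus E N} \<union> {k_plus E N<..}"
      unfolding annulus using below_imp_closed closed_imp_annulus annulus_imp_below by blast
    show "Tlam l ` E = E" if "k_plus E N < l"
      using range_Tlam_above_k_plus[OF that] .
    show "\<forall>a\<in>E. summable (\<lambda>k. l ^ Suc k * a k)" if "l < 1 / k_minus E N"
      using summable_range_functional_mem[OF lpos that] by blast
    show "Tlam l ` E = {a \<in> E. (\<Sum>k. l ^ Suc k * a k) = 0}" if "l < 1 / k_minus E N"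
      using range_Tlam_below_inv_k_minus[OF lpos that] unfolding range_functional_def .
    show "N_closed E N (Tlam l ` E)" if "l < 1 / k_minus E N"
      using below_imp_closed annulus_imp_below that by blast
    show "\<exists>v\<in>E. v \<notin> Tlam l ` E \<and> (\<forall>x\<in>E. \<exists>c y. y \<in> Tlam l ` E \<and> x = (\<lambda>k. c * v k + y k))"
      if "l < 1 / k_minus E N"
      using range_Tlam_codim_1[OF lpos that] unitv_mem[of 0] by blast
  qed
qed

end
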